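(* For all integers $n\ge 1$, $S_H^{\pm}(n,n-1)=5\binom{n+1}{4}+4\binom{n+1}{3}$.
   Context: $S_H^{\pm}(n,k)$ is the number of signed permutations $\pi$ of $\{1,\dots,n\}$ with $c(BG(\pi))=k$, where: $\pi'$ is the unsigned permutation of $\{1,\dots,2n\}$ obtained by replacing each $\pi_i>0$ by $(2\pi_i-1,2\pi_i)$ and each $\pi_i<0$ by $(2|\pi_i|,2|\pi_i|-1)$, with $\pi'_0=0,\pi'_{2n+1}=2n+1$; $BG(\pi)$ is the multigraph on $\{0,\dots,2n+1\}$ with black edges $\{\{\pi'_{2i},\pi'_{2i+1}\}:0\le i\le n\}$ and grey edges $\{\{2i,2i+1\}:0\le i\le n\}$ (parallel edges kept); $c$ counts its cycles. Binomial coefficients $\binom{m}{j}$ are $0$ when $j>m$. *)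

theory Defs
  imports Main
begin

definition signed_perm :: "nat \<Rightarrow> (nat \<Rightarrow> int) \<Rightarrow> bool" where
  "signed_perm n \<pi> \<longleftrightarrow>
     bij_betw (\<lambda>i. nat \<bar>\<pi> i\<bar>) {1..n} {1..n} \<and> (\<forall>i. i \<notin> {1..n} \<longrightarrow> \<pi> i = 0)"

definition unsigned_ext :: "nat \<Rightarrow> (nat \<Rightarrow> int) \<Rightarrow> nat \<Rightarrow> nat" where
  "unsigned_ext n \<pi> j =
     (if j = 0 then 0
      else if j = 2*n+1 then 2*n+1
      else (let i = (j+1) div 2; v = nat \<bar>\<pi> i\<bar> in
            if \<pi> i > 0 then (if odd j then 2*v - 1 else 2*v)
            else (if odd j then 2*v else 2*v - 1)))"

text \<open>Adjacency relation of the breakpoint graph BG(pi): black edges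
  {pi'_(2i), pi'_(2i+1)} and grey edges {2i, 2i+1}, 0 <= i <= n (both directions).\<close>
definition bg_adj :: "nat \<Rightarrow> (nat \<Rightarrow> int) \<Rightarrow> (nat \<times> nat) set" where
  "bg_adj n \<pi> = {(u,v). \<exists>i\<le>n.
       {u,v} = {unsigned_ext n \<pi> (2*i), unsigned_ext n \<pi> (2*i+1)} \<or> {u,v} = {2*i, 2*i+1}}"

text \<open>Every vertex of BG(pi) has degree 2 (one black, one grey edge, parallel edges
  kept), so BG(pi) is a disjoint union of cycles; the number of cycles is the number
  of connected components.\<close>
definition bg_cycles :: "nat \<Rightarrow> (nat \<Rightarrow> int) \<Rightarrow> nat" where
  "bg_cycles n \<pi> = card ({0..2*n+1} // ((bg_adj n \<pi>)\<^sup>*))"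

definition S_H_pm :: "nat \<Rightarrow> nat \<Rightarrow> nat" where
  "S_H_pm n k = card {\<pi>. signed_perm n \<pi> \<and> bg_cycles n \<pi> = k}"

end

theory Submission
  imports Defs
begin

text \<open>An adjacency of \<open>\<pi>\<close>, i.e. consecutive entries \<open>x, x + 1\<close> of the framed sequence
  \<open>0, \<pi>\<^sub>1, \<dots>, \<pi>\<^sub>n, n + 1\<close>, shows up in \<open>BG(\<pi>)\<close> as a black edge parallel to a grey edge,
  a cycle of length 2. Deleting one of the two entries and renumbering gives a signed permutation of
  \<open>n - 1\<close> whose breakpoint graph is the rest of \<open>BG(\<pi>)\<close> and whose breakpoints are the
  remaining ones. Hence the number of signed permutations of \<open>n\<close> with a prescribed breakpoint
  set \<open>B\<close> and with \<open>n + 1 - c(BG(\<pi>)) = d\<close> depends only on \<open>|B|\<close>: contracting every adjacency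
  leads to signed permutations of \<open>|B| - 1\<close> all of whose positions are breakpoints. Without
  adjacencies every cycle has at least 4 vertices, so \<open>4 c \<le> 2 n + 2\<close>; for \<open>c = n - 1\<close> this
  leaves \<open>|B| \<in> {3, 4}\<close>, with 4 and 5 permutations respectively (found by enumerating the signed
  permutations of 2 and 3). Summing over \<open>B \<subseteq> {0..n}\<close> gives the formula.\<close>

section \<open>Classes of the reflexive transitive closure of a relation\<close>

lemma rtrancl_Image_subset:
  assumes "E \<subseteq> V \<times> V" "x \<in> V"
  shows "E\<^sup>* `` {x} \<subseteq> V"
proof
  fix y assume "y \<in> E\<^sup>* `` {x}"
  then have "(x, y) \<in> E\<^sup>*" by simp
  then show "y \<in> V" by (induction rule: rtrancl_induct) (use assms in auto)
qed

lemma quotient_rtrancl_restrict: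
  assumes "E \<subseteq> V \<times> V"
  shows "V // E\<^sup>* = V // (E\<^sup>* \<inter> V \<times> V)"
proof -
  have "E\<^sup>* `` {x} = (E\<^sup>* \<inter> V \<times> V) `` {x}" if "x \<in> V" for x
    using rtrancl_Image_subset[OF assms that] that by blast
  then show ?thesis unfolding quotient_def by simp
qed

lemma equiv_rtrancl_restrict:
  assumes "E \<subseteq> V \<times> V" "sym E"
  shows "equiv V (E\<^sup>* \<inter> V \<times> V)"
proof (rule equivI)
  show "sym (E\<^sup>* \<inter> V \<times> V)"
    using sym_rtrancl[OF assms(2)] by (auto simp: sym_def)
  show "trans (E\<^sup>* \<inter> V \<times> V)"
    by (rule transI) (auto intro: rtrancl_trans)
qed (auto simp: refl_on_def)

lemma sum_card_quotient_rtrancl: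
  assumes "finite V" "E \<subseteq> V \<times> V" "sym E"
  shows "sum card (V // E\<^sup>*) = card V"
proof -
  let ?R = "E\<^sup>* \<inter> V \<times> V"
  have equiv: "equiv V ?R" using assms(2,3) by (rule equiv_rtrancl_restrict)
  have "pairwise disjnt (V // ?R)"
    unfolding pairwise_def disjnt_def using quotient_disj[OF equiv] by blast
  moreover have "finite X" if "X \<in> V // ?R" for X
    using finite_equiv_class[OF assms(1) _ that] by blast
  ultimately have "card (\<Union> (V // ?R)) = sum card (V // ?R)" by (rule card_Union_disjoint)
  then show ?thesis
    using Union_quotient[OF equiv] quotient_rtrancl_restrict[OF assms(2)] by simp
qed

lemma card_quotient_rtrancl_le:
  assumes "finite V" "E \<subseteq> V \<times> V" "sym E" and big: "\<And>x. x \<in> V \<Longrightarrow> k \<le> card (E\<^sup>* `` {x})"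
  shows "k * card (V // E\<^sup>*) \<le> card V"
proof -
  have "card (V // E\<^sup>*) * k \<le> sum card (V // E\<^sup>*)"
    using sum_bounded_below[of "V // E\<^sup>*" k card] big by (auto elim: quotientE)
  then show ?thesis using sum_card_quotient_rtrancl[OF assms(1-3)] by (simp add: mult.commute)
qed

lemma card_quotient_rtrancl_eq_2_iff:
  assumes "finite V" "E \<subseteq> V \<times> V" "sym E" and big: "\<And>y. y \<in> V \<Longrightarrow> k \<le> card (E\<^sup>* `` {y})"
    and "card V = 2 * k" "1 \<le> k" "x \<in> V"
  shows "card (V // E\<^sup>*) = 2 \<longleftrightarrow> card (E\<^sup>* `` {x}) = k"
proof -
  let ?Q = "V // E\<^sup>*" and ?X = "E\<^sup>* `` {x}"
  have X: "?X \<in> ?Q" using assms(7) by (rule quotientI)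
  have fin: "finite ?Q"
    unfolding quotient_rtrancl_restrict[OF assms(2)] using assms(1) by (rule finite_quotient) blast
  have total: "card ?X + sum card (?Q - {?X}) = 2 * k"
    using sum.remove[OF fin X, of card] sum_card_quotient_rtrancl[OF assms(1-3)] assms(5) by simp
  have rest: "card (?Q - {?X}) * k \<le> sum card (?Q - {?X})"
    using sum_bounded_below[of "?Q - {?X}" k card] big by (auto elim: quotientE)
  have card_Q: "card ?Q = Suc (card (?Q - {?X}))" using card.remove[OF fin X] .
  have "k \<le> card ?X" using big assms(7) .
  show ?thesis
  proof
    assume "card ?Q = 2"
    then have "card (?Q - {?X}) = 1" using card_Q by simp
    then show "card ?X = k" using total rest \<open>k \<le> card ?X\<close> by simp
  next
    assume "card ?X = k"
    then have sum_rest: "sum card (?Q - {?X}) = k" using total by simp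
    then have "?Q - {?X} \<noteq> {}" using assms(6) by (metis sum.empty not_one_le_zero)
    then have "1 \<le> card (?Q - {?X})" using fin by (simp add: Suc_le_eq card_gt_0_iff)
    moreover have "card (?Q - {?X}) * k \<le> 1 * k" using rest sum_rest by simp
    then have "card (?Q - {?X}) \<le> 1" using assms(6) by simp
    ultimately show "card ?Q = 2" using card_Q by simp
  qed
qed

lemma rtrancl_Image_bij_betw:
  assumes bij: "bij_betw \<phi> V W" and EV: "E \<subseteq> V \<times> V" and EW: "E' \<subseteq> W \<times> W"
    and rel: "\<And>x y. x \<in> V \<Longrightarrow> y \<in> V \<Longrightarrow> (x, y) \<in> E \<longleftrightarrow> (\<phi> x, \<phi> y) \<in> E'"
    and x: "x \<in> V"
  shows "\<phi> ` (E\<^sup>* `` {x}) = E'\<^sup>* `` {\<phi> x}"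
proof
  show "\<phi> ` (E\<^sup>* `` {x}) \<subseteq> E'\<^sup>* `` {\<phi> x}"
  proof (rule image_subsetI)
    fix y assume "y \<in> E\<^sup>* `` {x}"
    then have "(x, y) \<in> E\<^sup>*" by simp
    then have "(\<phi> x, \<phi> y) \<in> E'\<^sup>*"
    proof (induction rule: rtrancl_induct)
      case (step y w)
      then have "y \<in> V" "w \<in> V" using rtrancl_Image_subset[OF EV x] EV by auto
      then show ?case using step rel by (meson rtrancl_into_rtrancl)
    qed simp
    then show "\<phi> y \<in> E'\<^sup>* `` {\<phi> x}" by simp
  qed
next
  show "E'\<^sup>* `` {\<phi> x} \<subseteq> \<phi> ` (E\<^sup>* `` {x})"
  proof
    fix z assume "z \<in> E'\<^sup>* `` {\<phi> x}"
    then have "(\<phi> x, z) \<in> E'\<^sup>*" by simp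
    then show "z \<in> \<phi> ` (E\<^sup>* `` {x})"
    proof (induction rule: rtrancl_induct)
      case (step z w)
      then obtain y where y: "(x, y) \<in> E\<^sup>*" "z = \<phi> y" by auto
      have "y \<in> V" using y rtrancl_Image_subset[OF EV x] by auto
      obtain y' where y': "y' \<in> V" "w = \<phi> y'"
        using step EW bij unfolding bij_betw_def by auto
      then have "(y, y') \<in> E" using rel step y \<open>y \<in> V\<close> by auto
      then show ?case using y y' by (auto intro: rtrancl_into_rtrancl)
    qed (use x in auto)
  qed
qed

lemma card_quotient_rtrancl_bij_betw:
  assumes bij: "bij_betw \<phi> V W" and EV: "E \<subseteq> V \<times> V" and EW: "E' \<subseteq> W \<times> W"
    and rel: "\<And>x y. x \<in> V \<Longrightarrow> y \<in> V \<Longrightarrow> (x, y) \<in> E \<longleftrightarrow> (\<phi> x, \<phi> y) \<in> E'"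
  shows "card (V // E\<^sup>*) = card (W // E'\<^sup>*)"
proof -
  have "W // E'\<^sup>* = (\<lambda>x. E'\<^sup>* `` {\<phi> x}) ` V"
    using bij unfolding quotient_def bij_betw_def by auto
  also have "\<dots> = (\<lambda>X. \<phi> ` X) ` (V // E\<^sup>*)"
    using rtrancl_Image_bij_betw[OF assms] unfolding quotient_def by (auto simp: image_image)
  finally have "W // E'\<^sup>* = (\<lambda>X. \<phi> ` X) ` (V // E\<^sup>*)" .
  moreover have "inj_on (\<lambda>X. \<phi> ` X) (V // E\<^sup>*)"
  proof (rule inj_onI)
    fix X Y assume "X \<in> V // E\<^sup>*" "Y \<in> V // E\<^sup>*" "\<phi> ` X = \<phi> ` Y"
    moreover have "X \<subseteq> V" "Y \<subseteq> V"
      using calculation(1,2) rtrancl_Image_subset[OF EV] by (auto elim: quotientE)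
    ultimately show "X = Y" using bij by (metis bij_betw_def inj_on_image_eq_iff)
  qed
  ultimately show ?thesis by (simp add: card_image)
qed

lemma rtrancl_Image_restrict:
  assumes EV: "E \<subseteq> V \<times> V" and closed: "\<And>x y. (x, y) \<in> E \<Longrightarrow> x \<in> P \<longleftrightarrow> y \<in> P"
    and x: "x \<in> V - P"
  shows "E\<^sup>* `` {x} = (E \<inter> (V - P) \<times> (V - P))\<^sup>* `` {x}"
proof
  show "E\<^sup>* `` {x} \<subseteq> (E \<inter> (V - P) \<times> (V - P))\<^sup>* `` {x}"
  proof
    fix y assume "y \<in> E\<^sup>* `` {x}"
    then have "(x, y) \<in> E\<^sup>*" by simp
    then have "(x, y) \<in> (E \<inter> (V - P) \<times> (V - P))\<^sup>* \<and> y \<in> V - P"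
    proof (induction rule: rtrancl_induct)
      case (step y w)
      then have "w \<in> V - P" using EV closed by auto
      then show ?case using step by (auto intro: rtrancl_into_rtrancl)
    qed (use x in simp)
    then show "y \<in> (E \<inter> (V - P) \<times> (V - P))\<^sup>* `` {x}" by simp
  qed
  show "(E \<inter> (V - P) \<times> (V - P))\<^sup>* `` {x} \<subseteq> E\<^sup>* `` {x}" by (intro Image_mono rtrancl_mono) auto
qed

lemma card_quotient_rtrancl_remove_class:
  assumes fin: "finite V" and PV: "P \<subseteq> V" and "P \<noteq> {}" and EV: "E \<subseteq> V \<times> V"
    and closed: "\<And>x y. (x, y) \<in> E \<Longrightarrow> x \<in> P \<longleftrightarrow> y \<in> P"
    and connected: "\<And>x y. x \<in> P \<Longrightarrow> y \<in> P \<Longrightarrow> (x, y) \<in> E\<^sup>*"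
  shows "card (V // E\<^sup>*) = card ((V - P) // (E \<inter> (V - P) \<times> (V - P))\<^sup>*) + 1"
proof -
  define E' where "E' = E \<inter> (V - P) \<times> (V - P)"
  have inside: "E\<^sup>* `` {x} = P" if x: "x \<in> P" for x
  proof
    show "E\<^sup>* `` {x} \<subseteq> P"
    proof
      fix y assume "y \<in> E\<^sup>* `` {x}"
      then have "(x, y) \<in> E\<^sup>*" by simp
      then show "y \<in> P" by (induction rule: rtrancl_induct) (use x closed in auto)
    qed
    show "P \<subseteq> E\<^sup>* `` {x}" using connected x by auto
  qed
  have "V // E\<^sup>* = (\<lambda>x. E\<^sup>* `` {x}) ` P \<union> (\<lambda>x. E\<^sup>* `` {x}) ` (V - P)"
    unfolding quotient_def using PV by auto
  also have "\<dots> = insert P ((V - P) // E'\<^sup>*)"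
    using inside rtrancl_Image_restrict[OF EV closed] \<open>P \<noteq> {}\<close> unfolding quotient_def E'_def by auto
  finally have "V // E\<^sup>* = insert P ((V - P) // E'\<^sup>*)" .
  moreover have "P \<notin> (V - P) // E'\<^sup>*" by (auto elim!: quotientE)
  moreover have "finite ((V - P) // E'\<^sup>*)" using fin by (simp add: quotient_def)
  ultimately show ?thesis unfolding E'_def by simp
qed

section \<open>The breakpoint graph\<close>

text \<open>Entry \<open>i\<close> of the framed sequence, of value \<open>x\<close>, becomes the vertices
  \<open>left_end x, right_end x\<close> at the positions \<open>2 i - 1, 2 i\<close> of \<open>\<pi>'\<close>.\<close>

definition right_end :: "int \<Rightarrow> nat" where
  "right_end x = (if x \<ge> 0 then 2 * nat x else 2 * nat (-x) - 1)"

definition left_end :: "int \<Rightarrow> nat" where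
  "left_end x = (if x > 0 then 2 * nat x - 1 else 2 * nat (-x))"

definition grey_mate :: "nat \<Rightarrow> nat" where
  "grey_mate v = (if even v then Suc v else v - 1)"

definition framed :: "nat \<Rightarrow> (nat \<Rightarrow> int) \<Rightarrow> nat \<Rightarrow> int" where
  "framed n \<pi> i = (if i = 0 then 0 else if i = n + 1 then int n + 1 else \<pi> i)"

lemma unsigned_ext_eq:
  assumes "j \<le> 2 * n + 1"
  shows "unsigned_ext n \<pi> j =
    (if even j then right_end (framed n \<pi> (j div 2)) else left_end (framed n \<pi> ((j + 1) div 2)))"
proof -
  consider "j = 0" | "j = 2 * n + 1" | "j \<noteq> 0" "j \<noteq> 2 * n + 1" by blast
  then show ?thesis
  proof cases
    case 1
    then show ?thesis by (simp add: unsigned_ext_def right_end_def framed_def)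
  next
    case 2
    then show ?thesis by (simp add: unsigned_ext_def left_end_def framed_def nat_add_distrib)
  next
    case 3
    have "(j + 1) div 2 \<noteq> 0" "(j + 1) div 2 \<noteq> n + 1" using 3 assms by auto
    moreover have "even j \<Longrightarrow> (j + 1) div 2 = j div 2" by presburger
    ultimately show ?thesis using 3
      by (auto simp: unsigned_ext_def right_end_def left_end_def framed_def Let_def)
  qed
qed

lemma unsigned_ext_0: "unsigned_ext n \<pi> 0 = 0"
  by (simp add: unsigned_ext_def)

lemma grey_mate_right_end: "grey_mate (right_end x) = left_end (x + 1)"
  unfolding grey_mate_def right_end_def left_end_def by (cases "x \<ge> 0"; simp; presburger)

lemma grey_mate_grey_mate [simp]: "grey_mate (grey_mate v) = v"
  unfolding grey_mate_def by presburger

lemma grey_mate_neq: "grey_mate v \<noteq> v"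
  unfolding grey_mate_def by presburger

lemma grey_mate_le: "v \<le> 2 * n + 1 \<Longrightarrow> grey_mate v \<le> 2 * n + 1"
  unfolding grey_mate_def by presburger

lemma grey_mate_pair: "grey_mate (2 * i) = 2 * i + 1" "grey_mate (2 * i + 1) = 2 * i"
  unfolding grey_mate_def by auto

lemma left_end_eq_right_end: "left_end x = right_end (- x)"
  unfolding right_end_def left_end_def by auto

lemma int_right_end: "int (right_end x) = (if x \<ge> 0 then 2 * x else - 2 * x - 1)"
  unfolding right_end_def by auto

lemma right_end_eq_iff: "right_end x = right_end y \<longleftrightarrow> x = y"
proof
  assume "right_end x = right_end y"
  then have "int (right_end x) = int (right_end y)" by simp
  then show "x = y" unfolding int_right_end by (auto split: if_splits) presburger+
qed simp

lemma left_end_eq_iff: "left_end x = left_end y \<longleftrightarrow> x = y"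
  unfolding left_end_eq_right_end right_end_eq_iff by simp

lemma signed_permI:
  assumes zero: "\<And>i. i \<notin> {1..n} \<Longrightarrow> \<pi> i = 0"
    and range: "\<And>i. i \<in> {1..n} \<Longrightarrow> \<pi> i \<noteq> 0 \<and> \<bar>\<pi> i\<bar> \<le> int n"
    and inj: "\<And>i i'. i \<in> {1..n} \<Longrightarrow> i' \<in> {1..n} \<Longrightarrow> \<bar>\<pi> i\<bar> = \<bar>\<pi> i'\<bar> \<Longrightarrow> i = i'"
  shows "signed_perm n \<pi>"
proof -
  let ?f = "\<lambda>i. nat \<bar>\<pi> i\<bar>"
  have inj_f: "inj_on ?f {1..n}"
  proof (rule inj_onI)
    fix i i' assume i: "i \<in> {1..n}" "i' \<in> {1..n}" and "?f i = ?f i'"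
    then have "\<bar>\<pi> i\<bar> = \<bar>\<pi> i'\<bar>" by simp
    then show "i = i'" using inj i by blast
  qed
  have "?f ` {1..n} \<subseteq> {1..n}"
  proof (rule image_subsetI)
    fix i assume "i \<in> {1..n}"
    then show "?f i \<in> {1..n}" using range[of i] by auto
  qed
  with inj_f have "bij_betw ?f {1..n} {1..n}"
    by (simp add: bij_betw_def card_image card_subset_eq)
  then show ?thesis unfolding signed_perm_def using zero by blast
qed

context
  fixes n :: nat and \<pi> :: "nat \<Rightarrow> int"
  assumes sp: "signed_perm n \<pi>"
begin

lemma signed_perm_zero: "i \<notin> {1..n} \<Longrightarrow> \<pi> i = 0"
  using sp unfolding signed_perm_def by auto

lemma signed_perm_range: "i \<in> {1..n} \<Longrightarrow> \<pi> i \<noteq> 0 \<and> \<bar>\<pi> i\<bar> \<le> int n"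
proof -
  assume "i \<in> {1..n}"
  then have "nat \<bar>\<pi> i\<bar> \<in> {1..n}" using sp unfolding signed_perm_def bij_betw_def by auto
  then show ?thesis by auto
qed

lemma signed_perm_abs_inj: "i \<in> {1..n} \<Longrightarrow> i' \<in> {1..n} \<Longrightarrow> \<bar>\<pi> i\<bar> = \<bar>\<pi> i'\<bar> \<Longrightarrow> i = i'"
proof -
  assume "i \<in> {1..n}" "i' \<in> {1..n}" "\<bar>\<pi> i\<bar> = \<bar>\<pi> i'\<bar>"
  moreover have "inj_on (\<lambda>i. nat \<bar>\<pi> i\<bar>) {1..n}"
    using sp unfolding signed_perm_def bij_betw_def by blast
  ultimately show "i = i'" by (metis eq_nat_nat_iff abs_ge_zero inj_onD)
qed

end

context
  fixes n :: nat and \<pi> :: "nat \<Rightarrow> int"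
  assumes sp: "signed_perm n \<pi>"
begin

lemma framed_abs_inj:
  assumes "i \<le> n + 1" "i' \<le> n + 1" "\<bar>framed n \<pi> i\<bar> = \<bar>framed n \<pi> i'\<bar>"
  shows "i = i'"
proof (cases "i \<in> {1..n} \<and> i' \<in> {1..n}")
  case True
  then have "framed n \<pi> i = \<pi> i" "framed n \<pi> i' = \<pi> i'" by (auto simp: framed_def)
  then show ?thesis using assms(3) True signed_perm_abs_inj[OF sp] by auto
next
  case False
  have range: "0 < \<bar>\<pi> j\<bar> \<and> \<bar>\<pi> j\<bar> \<le> int n" if "j \<in> {1..n}" for j
    using signed_perm_range[OF sp that] by auto
  show ?thesis using False assms range[of i] range[of i'] by (auto simp: framed_def split: if_splits)
qed

lemma framed_nonzero: "1 \<le> i \<Longrightarrow> i \<le> n + 1 \<Longrightarrow> framed n \<pi> i \<noteq> 0"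
  using signed_perm_range[OF sp] by (auto simp: framed_def)

lemma framed_abs_le: "i \<le> n \<Longrightarrow> \<bar>framed n \<pi> i\<bar> \<le> int n"
  using signed_perm_range[OF sp] by (auto simp: framed_def)

lemma unsigned_ext_le: "j \<le> 2 * n + 1 \<Longrightarrow> unsigned_ext n \<pi> j \<le> 2 * n + 1"
proof -
  assume j: "j \<le> 2 * n + 1"
  show ?thesis
  proof (cases "even j")
    case True
    then have "\<bar>framed n \<pi> (j div 2)\<bar> \<le> int n" using j by (intro framed_abs_le) presburger
    then have "int (right_end (framed n \<pi> (j div 2))) \<le> 2 * int n + 1"
      unfolding int_right_end by auto
    then show ?thesis using True j by (simp add: unsigned_ext_eq)
  next
    case False
    show ?thesis
    proof (cases "(j + 1) div 2 = n + 1")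
      case True
      then show ?thesis using False j
        by (simp add: unsigned_ext_eq framed_def left_end_def nat_add_distrib)
    next
      case last: False
      then have "\<bar>framed n \<pi> ((j + 1) div 2)\<bar> \<le> int n" using j by (intro framed_abs_le) presburger
      then have "int (left_end (framed n \<pi> ((j + 1) div 2))) \<le> 2 * int n + 1"
        unfolding left_end_eq_right_end int_right_end by auto
      then show ?thesis using False j by (simp add: unsigned_ext_eq)
    qed
  qed
qed

lemma unsigned_ext_inj:
  assumes j: "j \<le> 2 * n + 1" "j' \<le> 2 * n + 1" and eq: "unsigned_ext n \<pi> j = unsigned_ext n \<pi> j'"
  shows "j = j'"
proof -
  have framed_inj: "a = b" if "a \<le> n + 1" "b \<le> n + 1" "framed n \<pi> a = framed n \<pi> b" for a b
    using framed_abs_inj that by auto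
  have not_opposite: False
    if "a \<le> n + 1" "1 \<le> b" "b \<le> n + 1" "framed n \<pi> a = - framed n \<pi> b" for a b
    using framed_abs_inj[of a b] framed_nonzero[of b] that by auto
  consider "even j" "even j'" | "even j" "odd j'" | "odd j" "even j'" | "odd j" "odd j'" by blast
  then show "j = j'"
  proof cases
    case 1
    then have "framed n \<pi> (j div 2) = framed n \<pi> (j' div 2)"
      using eq j by (simp add: unsigned_ext_eq right_end_eq_iff)
    then have "j div 2 = j' div 2" using framed_inj j by simp
    then show ?thesis using 1 by presburger
  next
    case 2
    then have "framed n \<pi> (j div 2) = - framed n \<pi> ((j' + 1) div 2)"
      using eq j by (simp add: unsigned_ext_eq left_end_eq_right_end right_end_eq_iff)
    moreover have "j div 2 \<le> n + 1" "1 \<le> (j' + 1) div 2" "(j' + 1) div 2 \<le> n + 1"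
      using j 2 by auto
    ultimately show ?thesis using not_opposite by blast
  next
    case 3
    then have "framed n \<pi> (j' div 2) = - framed n \<pi> ((j + 1) div 2)"
      using eq j by (simp add: unsigned_ext_eq left_end_eq_right_end right_end_eq_iff)
    moreover have "j' div 2 \<le> n + 1" "1 \<le> (j + 1) div 2" "(j + 1) div 2 \<le> n + 1"
      using j 3 by auto
    ultimately show ?thesis using not_opposite by blast
  next
    case 4
    then have "framed n \<pi> ((j + 1) div 2) = framed n \<pi> ((j' + 1) div 2)"
      using eq j by (simp add: unsigned_ext_eq left_end_eq_iff)
    then have "(j + 1) div 2 = (j' + 1) div 2" using framed_inj j by simp
    then show ?thesis using 4 by presburger
  qed
qed

lemma bij_unsigned_ext: "bij_betw (unsigned_ext n \<pi>) {0..2 * n + 1} {0..2 * n + 1}"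
proof -
  have inj: "inj_on (unsigned_ext n \<pi>) {0..2 * n + 1}"
    by (rule inj_onI) (rule unsigned_ext_inj, auto)
  moreover have "unsigned_ext n \<pi> ` {0..2 * n + 1} \<subseteq> {0..2 * n + 1}"
    using unsigned_ext_le by auto
  ultimately show ?thesis by (simp add: bij_betw_def card_image card_subset_eq)
qed

lemma unsigned_ext_surj: "v \<le> 2 * n + 1 \<Longrightarrow> \<exists>j \<le> 2 * n + 1. unsigned_ext n \<pi> j = v"
  using bij_unsigned_ext unfolding bij_betw_def by (metis atLeastAtMost_iff imageE le0)

end

lemma ex_grey_pair_iff:
  "(\<exists>i\<le>n. {u, v} = {f (2 * i), f (2 * i + 1)}) \<longleftrightarrow> (\<exists>j\<le>2 * n + 1. u = f j \<and> v = f (grey_mate j))"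
proof
  assume "\<exists>i\<le>n. {u, v} = {f (2 * i), f (2 * i + 1)}"
  then obtain i where i: "i \<le> n" and "{u, v} = {f (2 * i), f (2 * i + 1)}" by blast
  then consider "u = f (2 * i)" "v = f (2 * i + 1)" | "u = f (2 * i + 1)" "v = f (2 * i)"
    by (auto simp: doubleton_eq_iff)
  then show "\<exists>j\<le>2 * n + 1. u = f j \<and> v = f (grey_mate j)"
  proof cases
    case 1
    then show ?thesis using i by (intro exI[of _ "2 * i"]) (simp add: grey_mate_pair)
  next
    case 2
    then show ?thesis using i by (intro exI[of _ "2 * i + 1"]) (simp add: grey_mate_def)
  qed
next
  assume "\<exists>j\<le>2 * n + 1. u = f j \<and> v = f (grey_mate j)"
  then obtain j where j: "j \<le> 2 * n + 1" "u = f j" "v = f (grey_mate j)" by blast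
  have "j = 2 * (j div 2) \<and> grey_mate j = 2 * (j div 2) + 1 \<or>
        j = 2 * (j div 2) + 1 \<and> grey_mate j = 2 * (j div 2)"
    unfolding grey_mate_def by presburger
  then have "{u, v} = {f (2 * (j div 2)), f (2 * (j div 2) + 1)}" using j by auto
  then show "\<exists>i\<le>n. {u, v} = {f (2 * i), f (2 * i + 1)}" using j(1) by (intro exI[of _ "j div 2"]) auto
qed

lemma bg_adj_iff:
  "(u, v) \<in> bg_adj n \<pi> \<longleftrightarrow>
     (\<exists>j\<le>2 * n + 1. u = unsigned_ext n \<pi> j \<and> v = unsigned_ext n \<pi> (grey_mate j)) \<or>
     (u \<le> 2 * n + 1 \<and> v = grey_mate u)"
proof -
  have "(\<exists>i\<le>n. {u, v} = {2 * i, 2 * i + 1}) \<longleftrightarrow> (\<exists>j\<le>2 * n + 1. u = j \<and> v = grey_mate j)"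
    using ex_grey_pair_iff[of n u v id] by simp
  also have "\<dots> \<longleftrightarrow> u \<le> 2 * n + 1 \<and> v = grey_mate u" by blast
  finally have grey: "(\<exists>i\<le>n. {u, v} = {2 * i, 2 * i + 1}) \<longleftrightarrow> u \<le> 2 * n + 1 \<and> v = grey_mate u" .
  have "(u, v) \<in> bg_adj n \<pi> \<longleftrightarrow>
      (\<exists>i\<le>n. {u, v} = {unsigned_ext n \<pi> (2 * i), unsigned_ext n \<pi> (2 * i + 1)}) \<or>
      (\<exists>i\<le>n. {u, v} = {2 * i, 2 * i + 1})"
    unfolding bg_adj_def by blast
  then show ?thesis unfolding ex_grey_pair_iff grey .
qed

lemma sym_bg_adj: "sym (bg_adj n \<pi>)"
  unfolding bg_adj_def sym_def by (auto simp: insert_commute)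

lemma bg_cycles_ge_1: "1 \<le> bg_cycles n \<pi>"
proof -
  have "{0..2 * n + 1} // (bg_adj n \<pi>)\<^sup>* \<noteq> {}" by simp
  moreover have "finite ({0..2 * n + 1} // (bg_adj n \<pi>)\<^sup>*)" by (simp add: quotient_def)
  ultimately show ?thesis unfolding bg_cycles_def by (simp add: Suc_le_eq card_gt_0_iff)
qed

definition breakpoints :: "nat \<Rightarrow> (nat \<Rightarrow> int) \<Rightarrow> nat set" where
  "breakpoints n \<pi> = {e \<in> {0..n}. framed n \<pi> (Suc e) \<noteq> framed n \<pi> e + 1}"

lemma breakpoints_subset: "breakpoints n \<pi> \<subseteq> {0..n}"
  unfolding breakpoints_def by blast

lemma grey_black_edge_iff_adjacency:
  assumes "e \<le> n"
  shows "grey_mate (unsigned_ext n \<pi> (2 * e)) = unsigned_ext n \<pi> (2 * e + 1) \<longleftrightarrow>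
    framed n \<pi> (Suc e) = framed n \<pi> e + 1"
proof -
  have "unsigned_ext n \<pi> (2 * e) = right_end (framed n \<pi> e)"
    "unsigned_ext n \<pi> (2 * e + 1) = left_end (framed n \<pi> (Suc e))"
    using assms by (simp_all add: unsigned_ext_eq)
  then show ?thesis by (auto simp: grey_mate_right_end left_end_eq_iff)
qed

context
  fixes n :: nat and \<pi> :: "nat \<Rightarrow> int"
  assumes sp: "signed_perm n \<pi>"
begin

lemma bg_adj_subset: "bg_adj n \<pi> \<subseteq> {0..2 * n + 1} \<times> {0..2 * n + 1}"
  using unsigned_ext_le[OF sp] grey_mate_le by (auto simp: bg_adj_iff)

lemma all_breakpoints_no_grey_black_edge:
  assumes all: "breakpoints n \<pi> = {0..n}" and j: "j \<le> 2 * n + 1"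
  shows "unsigned_ext n \<pi> (grey_mate j) \<noteq> grey_mate (unsigned_ext n \<pi> j)"
proof
  assume parallel: "unsigned_ext n \<pi> (grey_mate j) = grey_mate (unsigned_ext n \<pi> j)"
  define e where "e = j div 2"
  have "grey_mate (unsigned_ext n \<pi> (2 * e)) = unsigned_ext n \<pi> (2 * e + 1)"
  proof (cases "even j")
    case True
    then have "j = 2 * e" "grey_mate j = 2 * e + 1" unfolding e_def grey_mate_def by auto
    then show ?thesis using parallel by simp
  next
    case False
    then have "j = 2 * e + 1" "grey_mate j = 2 * e" unfolding e_def grey_mate_def by auto
    then show ?thesis using parallel by (metis grey_mate_grey_mate)
  qed
  moreover have "e \<le> n" using j unfolding e_def by auto
  ultimately have "framed n \<pi> (Suc e) = framed n \<pi> e + 1"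
    using grey_black_edge_iff_adjacency by blast
  then have "e \<notin> breakpoints n \<pi>" unfolding breakpoints_def by auto
  then show False using all \<open>e \<le> n\<close> by auto
qed

text \<open>A vertex, its grey neighbour and their black neighbours are distinct: a black edge
  parallel to a grey one would be an adjacency.\<close>

lemma all_breakpoints_card_cycle_ge_4:
  assumes all: "breakpoints n \<pi> = {0..n}" and x: "x \<in> {0..2 * n + 1}"
  shows "4 \<le> card ((bg_adj n \<pi>)\<^sup>* `` {x})"
proof -
  let ?E = "bg_adj n \<pi>" and ?ext = "unsigned_ext n \<pi>"
  obtain j where j: "j \<le> 2 * n + 1" "?ext j = x" using unsigned_ext_surj[OF sp] x by auto
  have "grey_mate x \<le> 2 * n + 1" using grey_mate_le x by simp
  then obtain j' where j': "j' \<le> 2 * n + 1" "?ext j' = grey_mate x"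
    using unsigned_ext_surj[OF sp] by blast
  have j_mates: "grey_mate j \<le> 2 * n + 1" "grey_mate j' \<le> 2 * n + 1" using j j' grey_mate_le by auto
  have "(x, ?ext (grey_mate j)) \<in> ?E" "(x, grey_mate x) \<in> ?E"
    "(grey_mate x, ?ext (grey_mate j')) \<in> ?E"
    unfolding bg_adj_iff using j j' x by auto
  then have sub: "{x, grey_mate x, ?ext (grey_mate j), ?ext (grey_mate j')} \<subseteq> ?E\<^sup>* `` {x}"
    by (auto intro: rtrancl_into_rtrancl)
  have inj: "a = b" if "a \<le> 2 * n + 1" "b \<le> 2 * n + 1" "?ext a = ?ext b" for a b
    using unsigned_ext_inj[OF sp] that by blast
  have no_parallel: "?ext (grey_mate j) \<noteq> grey_mate x"
    using all_breakpoints_no_grey_black_edge[OF all j(1)] j by simp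
  have "x \<noteq> grey_mate x" "grey_mate x \<noteq> ?ext (grey_mate j')" "x \<noteq> ?ext (grey_mate j)"
    using grey_mate_neq inj[of j "grey_mate j"] inj[of j' "grey_mate j'"] j j' j_mates by metis+
  moreover have "x \<noteq> ?ext (grey_mate j')"
    using inj[of "grey_mate j'" j] j j' j_mates no_parallel by (metis grey_mate_grey_mate)
  moreover have "?ext (grey_mate j) \<noteq> ?ext (grey_mate j')"
    using inj[of "grey_mate j" "grey_mate j'"] j j' j_mates grey_mate_neq by (metis grey_mate_grey_mate)
  ultimately have "card {x, grey_mate x, ?ext (grey_mate j), ?ext (grey_mate j')} = 4"
    using no_parallel by simp
  moreover have "finite (?E\<^sup>* `` {x})"
    using rtrancl_Image_subset[OF bg_adj_subset x] by (rule finite_subset) simp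
  ultimately show ?thesis using sub by (metis card_mono)
qed

lemma all_breakpoints_bg_cycles_le: "breakpoints n \<pi> = {0..n} \<Longrightarrow> 4 * bg_cycles n \<pi> \<le> 2 * n + 2"
  unfolding bg_cycles_def
  using card_quotient_rtrancl_le[OF _ bg_adj_subset sym_bg_adj] all_breakpoints_card_cycle_ge_4
  by simp

end

section \<open>Deleting and inserting an entry\<close>

text \<open>Deleting the entry of absolute value \<open>a\<close> renumbers the larger absolute values by
  \<open>shrink a\<close>; inserting one of absolute value \<open>a\<close> renumbers by \<open>grow a\<close>.\<close>

definition shrink :: "int \<Rightarrow> int \<Rightarrow> int" where
  "shrink a x = (if \<bar>x\<bar> > a then x - sgn x else x)"

definition grow :: "int \<Rightarrow> int \<Rightarrow> int" where
  "grow a x = (if \<bar>x\<bar> \<ge> a then x + sgn x else x)"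

definition delete_at :: "nat \<Rightarrow> nat \<Rightarrow> (nat \<Rightarrow> int) \<Rightarrow> nat \<Rightarrow> int" where
  "delete_at n p \<pi> i =
    (if 1 \<le> i \<and> i \<le> n - 1 then shrink \<bar>\<pi> p\<bar> (\<pi> (if i < p then i else Suc i)) else 0)"

definition insert_at :: "nat \<Rightarrow> nat \<Rightarrow> int \<Rightarrow> (nat \<Rightarrow> int) \<Rightarrow> nat \<Rightarrow> int" where
  "insert_at n p s \<pi> i =
    (if 1 \<le> i \<and> i \<le> n then
       (if i < p then grow \<bar>s\<bar> (\<pi> i) else if i = p then s else grow \<bar>s\<bar> (\<pi> (i - 1)))
     else 0)"

lemma abs_shrink: "a \<ge> 0 \<Longrightarrow> \<bar>shrink a x\<bar> = (if \<bar>x\<bar> > a then \<bar>x\<bar> - 1 else \<bar>x\<bar>)"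
  unfolding shrink_def by (auto simp: sgn_if)

lemma abs_grow: "a \<ge> 1 \<Longrightarrow> \<bar>grow a x\<bar> = (if \<bar>x\<bar> \<ge> a then \<bar>x\<bar> + 1 else \<bar>x\<bar>)"
  unfolding grow_def by (auto simp: sgn_if)

lemma abs_grow_eq_iff: "a \<ge> 1 \<Longrightarrow> \<bar>grow a x\<bar> = \<bar>grow a y\<bar> \<longleftrightarrow> \<bar>x\<bar> = \<bar>y\<bar>"
  unfolding abs_grow by auto

lemma shrink_grow: "a \<ge> 1 \<Longrightarrow> shrink a (grow a x) = x"
  unfolding shrink_def grow_def by (auto simp: sgn_if)

lemma grow_shrink: "a \<ge> 1 \<Longrightarrow> \<bar>x\<bar> \<noteq> a \<Longrightarrow> grow a (shrink a x) = x"
  unfolding shrink_def grow_def by (auto simp: sgn_if)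

context
  fixes n p :: nat and \<pi> :: "nat \<Rightarrow> int"
  assumes sp: "signed_perm n \<pi>" and p: "p \<in> {1..n}"
begin

lemma signed_perm_delete_at: "signed_perm (n - 1) (delete_at n p \<pi>)"
proof (rule signed_permI)
  let ?a = "\<bar>\<pi> p\<bar>"
  define idx where "idx i = (if i < p then i else Suc i)" for i
  have a: "1 \<le> ?a" "?a \<le> int n" using signed_perm_range[OF sp p] by auto
  have delete_at: "delete_at n p \<pi> i = shrink ?a (\<pi> (idx i))" if "i \<in> {1..n - 1}" for i
    using that unfolding delete_at_def idx_def by auto
  have idx: "idx i \<in> {1..n}" "idx i \<noteq> p" if "i \<in> {1..n - 1}" for i
    using that p unfolding idx_def by auto
  have range: "\<pi> (idx i) \<noteq> 0 \<and> \<bar>\<pi> (idx i)\<bar> \<le> int n \<and> \<bar>\<pi> (idx i)\<bar> \<noteq> ?a"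
    if i: "i \<in> {1..n - 1}" for i
    using signed_perm_range[OF sp idx(1)[OF i]] signed_perm_abs_inj[OF sp idx(1)[OF i] p] idx(2)[OF i]
    by blast
  show "delete_at n p \<pi> i = 0" if "i \<notin> {1..n - 1}" for i
    using that unfolding delete_at_def by auto
  show "delete_at n p \<pi> i \<noteq> 0 \<and> \<bar>delete_at n p \<pi> i\<bar> \<le> int (n - 1)" if i: "i \<in> {1..n - 1}" for i
    using range[OF i] delete_at[OF i] a abs_shrink[of ?a "\<pi> (idx i)"] i by (auto split: if_splits)
  show "i = i'" if i: "i \<in> {1..n - 1}" "i' \<in> {1..n - 1}"
    and eq: "\<bar>delete_at n p \<pi> i\<bar> = \<bar>delete_at n p \<pi> i'\<bar>" for i i'
  proof -
    have "\<bar>\<pi> (idx i)\<bar> = \<bar>\<pi> (idx i')\<bar>"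
      using range[OF i(1)] range[OF i(2)] eq delete_at[OF i(1)] delete_at[OF i(2)] a
        abs_shrink[of ?a "\<pi> (idx i)"] abs_shrink[of ?a "\<pi> (idx i')"] by (auto split: if_splits)
    then have "idx i = idx i'" using signed_perm_abs_inj[OF sp] idx i by blast
    then show ?thesis unfolding idx_def by (auto split: if_splits)
  qed
qed

lemma insert_at_delete_at: "insert_at n p (\<pi> p) (delete_at n p \<pi>) = \<pi>"
proof
  fix i
  let ?a = "\<bar>\<pi> p\<bar>"
  have a: "1 \<le> ?a" using signed_perm_range[OF sp p] by auto
  consider "i \<notin> {1..n}" | "i \<in> {1..n}" "i < p" | "i = p" | "i \<in> {1..n}" "i > p" by fastforce
  then show "insert_at n p (\<pi> p) (delete_at n p \<pi>) i = \<pi> i"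
  proof cases
    case 1
    then show ?thesis unfolding insert_at_def using signed_perm_zero[OF sp] by auto
  next
    case 2
    then have "delete_at n p \<pi> i = shrink ?a (\<pi> i)" "\<bar>\<pi> i\<bar> \<noteq> ?a"
      using p signed_perm_abs_inj[OF sp _ p, of i] unfolding delete_at_def by auto
    then show ?thesis unfolding insert_at_def using 2 a grow_shrink by auto
  next
    case 3
    then show ?thesis unfolding insert_at_def using p by auto
  next
    case 4
    then have "delete_at n p \<pi> (i - 1) = shrink ?a (\<pi> i)" "\<bar>\<pi> i\<bar> \<noteq> ?a"
      using p signed_perm_abs_inj[OF sp _ p, of i] unfolding delete_at_def by auto
    then show ?thesis unfolding insert_at_def using 4 a grow_shrink by auto
  qed
qed

lemma framed_delete_at:
  assumes "i \<le> n"
  shows "framed (n - 1) (delete_at n p \<pi>) i = shrink \<bar>\<pi> p\<bar> (framed n \<pi> (if i < p then i else Suc i))"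
proof -
  have "\<bar>\<pi> p\<bar> \<le> int n" using signed_perm_range[OF sp p] by auto
  moreover consider "i = 0" | "i = n" | "1 \<le> i" "i \<le> n - 1" using assms by fastforce
  ultimately show ?thesis using p unfolding framed_def shrink_def delete_at_def by cases auto
qed

end

context
  fixes n p :: nat and \<pi> :: "nat \<Rightarrow> int" and s :: int
  assumes sp: "signed_perm (n - 1) \<pi>" and p: "p \<in> {1..n}" and s: "s \<noteq> 0" "\<bar>s\<bar> \<le> int n"
begin

lemma insert_at_off_p:
  assumes "i \<in> {1..n}" "i \<noteq> p"
  shows "insert_at n p s \<pi> i = grow \<bar>s\<bar> (\<pi> (if i < p then i else i - 1))"
    and "(if i < p then i else i - 1) \<in> {1..n - 1}"
  using assms p unfolding insert_at_def by auto

lemma insert_at_range: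
  assumes i: "i \<in> {1..n}"
  shows "insert_at n p s \<pi> i \<noteq> 0 \<and> \<bar>insert_at n p s \<pi> i\<bar> \<le> int n \<and>
    (i \<noteq> p \<longrightarrow> \<bar>insert_at n p s \<pi> i\<bar> \<noteq> \<bar>s\<bar>)"
proof (cases "i = p")
  case True
  then show ?thesis using p s unfolding insert_at_def by auto
next
  case False
  obtain y where y: "insert_at n p s \<pi> i = grow \<bar>s\<bar> y" "y \<noteq> 0" "\<bar>y\<bar> \<le> int (n - 1)"
    using insert_at_off_p[OF i False] signed_perm_range[OF sp] by blast
  moreover have "\<bar>s\<bar> \<ge> 1" using s by simp
  ultimately have "\<bar>insert_at n p s \<pi> i\<bar> = (if \<bar>y\<bar> \<ge> \<bar>s\<bar> then \<bar>y\<bar> + 1 else \<bar>y\<bar>)"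
    using abs_grow by simp
  then show ?thesis using y(2,3) p by (auto split: if_splits)
qed

lemma signed_perm_insert_at: "signed_perm n (insert_at n p s \<pi>)"
proof (rule signed_permI)
  show "insert_at n p s \<pi> i = 0" if "i \<notin> {1..n}" for i
    using that unfolding insert_at_def by auto
  show "insert_at n p s \<pi> i \<noteq> 0 \<and> \<bar>insert_at n p s \<pi> i\<bar> \<le> int n" if "i \<in> {1..n}" for i
    using insert_at_range[OF that] by simp
  show "i = i'" if i: "i \<in> {1..n}" "i' \<in> {1..n}"
    and eq: "\<bar>insert_at n p s \<pi> i\<bar> = \<bar>insert_at n p s \<pi> i'\<bar>" for i i'
  proof (cases "i = p \<or> i' = p")
    case True
    have "insert_at n p s \<pi> p = s" using p unfolding insert_at_def by auto
    then show ?thesis using True insert_at_range[OF i(1)] insert_at_range[OF i(2)] eq by auto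
  next
    case False
    let ?j = "if i < p then i else i - 1" and ?j' = "if i' < p then i' else i' - 1"
    have "\<bar>\<pi> ?j\<bar> = \<bar>\<pi> ?j'\<bar>"
      using insert_at_off_p(1)[OF i(1)] insert_at_off_p(1)[OF i(2)] False eq abs_grow_eq_iff s by simp
    then have "?j = ?j'"
      using signed_perm_abs_inj[OF sp] insert_at_off_p(2)[OF i(1)] insert_at_off_p(2)[OF i(2)] False by blast
    then show ?thesis using False p by (auto split: if_splits)
  qed
qed

lemma delete_at_insert_at: "delete_at n p (insert_at n p s \<pi>) = \<pi>"
proof
  fix i
  have b: "1 \<le> \<bar>s\<bar>" using s by auto
  have "insert_at n p s \<pi> p = s" unfolding insert_at_def using p by auto
  then show "delete_at n p (insert_at n p s \<pi>) i = \<pi> i"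
    using p b shrink_grow signed_perm_zero[OF sp]
    by (cases "1 \<le> i \<and> i \<le> n - 1") (auto simp: delete_at_def insert_at_def)
qed

lemma framed_insert_at:
  assumes "i \<le> n + 1"
  shows "framed n (insert_at n p s \<pi>) i =
    (if i < p then grow \<bar>s\<bar> (framed (n - 1) \<pi> i)
     else if i = p then s else grow \<bar>s\<bar> (framed (n - 1) \<pi> (i - 1)))"
proof -
  consider "i = 0" | "i = n + 1" | "1 \<le> i" "i \<le> n" using assms by fastforce
  then show ?thesis using p s unfolding framed_def grow_def insert_at_def by cases auto
qed

end

section \<open>Contracting an adjacency\<close>

definition drop_pair :: "nat \<Rightarrow> nat \<Rightarrow> nat" where
  "drop_pair k v = (if v < 2 * k then v else v - 2)"

lemma int_drop_pair:
  "v \<notin> {2 * k, 2 * k + 1} \<Longrightarrow> int (drop_pair k v) = (if int v < 2 * int k then int v else int v - 2)"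
  unfolding drop_pair_def by auto

lemma drop_pair_eq_iff:
  "u \<notin> {2 * k, 2 * k + 1} \<Longrightarrow> v \<notin> {2 * k, 2 * k + 1} \<Longrightarrow> drop_pair k u = drop_pair k v \<longleftrightarrow> u = v"
  unfolding drop_pair_def by auto

lemma drop_pair_grey_mate:
  "v \<notin> {2 * k, 2 * k + 1} \<Longrightarrow> drop_pair k (grey_mate v) = grey_mate (drop_pair k v)"
  unfolding drop_pair_def grey_mate_def by auto

lemma grey_mate_mem_pair_iff: "grey_mate v \<in> {2 * k, 2 * k + 1} \<longleftrightarrow> v \<in> {2 * k, 2 * k + 1}"
  unfolding grey_mate_def by (auto; presburger)

lemma bij_betw_drop_pair:
  assumes "k \<le> n" "1 \<le> n"
  shows "bij_betw (drop_pair k) ({0..2 * n + 1} - {2 * k, 2 * k + 1}) {0..2 * (n - 1) + 1}"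
proof (rule bij_betw_imageI)
  show "inj_on (drop_pair k) ({0..2 * n + 1} - {2 * k, 2 * k + 1})"
    by (rule inj_onI) (simp add: drop_pair_eq_iff)
  show "drop_pair k ` ({0..2 * n + 1} - {2 * k, 2 * k + 1}) = {0..2 * (n - 1) + 1}"
  proof
    show "drop_pair k ` ({0..2 * n + 1} - {2 * k, 2 * k + 1}) \<subseteq> {0..2 * (n - 1) + 1}"
      using assms unfolding drop_pair_def by auto
    show "{0..2 * (n - 1) + 1} \<subseteq> drop_pair k ` ({0..2 * n + 1} - {2 * k, 2 * k + 1})"
    proof
      fix w assume w: "w \<in> {0..2 * (n - 1) + 1}"
      show "w \<in> drop_pair k ` ({0..2 * n + 1} - {2 * k, 2 * k + 1})"
      proof (cases "w < 2 * k")
        case True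
        then show ?thesis using w assms unfolding drop_pair_def by (intro image_eqI[of _ _ w]) auto
      next
        case False
        then show ?thesis using w assms unfolding drop_pair_def by (intro image_eqI[of _ _ "w + 2"]) auto
      qed
    qed
  qed
qed

text \<open>An adjacency ending in the entry \<open>\<plusminus>a\<close> is the grey edge \<open>{2 k, 2 k + 1}\<close> with
  \<open>k = a - 1\<close> (sign \<open>+\<close>) or \<open>k = a\<close> (sign \<open>-\<close>). Removing that edge and renumbering the
  entries by \<open>shrink a\<close> renumbers the other vertices by \<open>drop_pair k\<close>.\<close>

lemma right_end_shrink:
  assumes "a \<ge> 1" "int k = a - 1 \<or> int k = a" "\<bar>x\<bar> \<noteq> a" "right_end x \<notin> {2 * k, 2 * k + 1}"
  shows "right_end (shrink a x) = drop_pair k (right_end x)"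
proof -
  have "int (right_end x) \<noteq> 2 * int k" "int (right_end x) \<noteq> 2 * int k + 1" using assms(4) by auto
  then have "int (right_end (shrink a x)) = int (drop_pair k (right_end x))"
    unfolding int_drop_pair[OF assms(4)] shrink_def
    using int_right_end[of x] assms(1-3) by (auto simp: sgn_if int_right_end split: if_splits)
  then show ?thesis by simp
qed

lemma left_end_shrink:
  assumes "a \<ge> 1" "int k = a - 1 \<or> int k = a" "\<bar>x\<bar> \<noteq> a" "left_end x \<notin> {2 * k, 2 * k + 1}"
  shows "left_end (shrink a x) = drop_pair k (left_end x)"
proof -
  have "shrink a (- x) = - shrink a x" unfolding shrink_def by (auto simp: sgn_if)
  then show ?thesis using right_end_shrink[of a k "- x"] assms unfolding left_end_eq_right_end by auto
qed

lemma right_end_shrink_adjacent: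
  assumes "y \<noteq> 0" "x + 1 = y"
  shows "right_end (shrink \<bar>y\<bar> x) = drop_pair (right_end x div 2) (right_end y)"
proof -
  have "int (right_end (shrink \<bar>y\<bar> x)) = int (drop_pair (right_end x div 2) (right_end y))"
  proof (cases "y > 0")
    case True
    then have "right_end x = 2 * nat x" "right_end y = 2 * nat y" "shrink \<bar>y\<bar> x = x"
      using assms unfolding right_end_def shrink_def by auto
    then show ?thesis using True assms unfolding drop_pair_def by auto
  next
    case False
    then have "right_end x = 2 * nat (- x) - 1" "right_end y = 2 * nat (- y) - 1" "shrink \<bar>y\<bar> x = y"
      using assms unfolding right_end_def shrink_def by (auto simp: sgn_if)
    then show ?thesis using False assms unfolding drop_pair_def by auto
  qed
  then show ?thesis by simp
qed

lemma right_end_div_2_cases: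
  assumes "y \<noteq> 0" "x + 1 = y \<or> (x = y \<and> y > 0)"
  shows "int (right_end x div 2) = \<bar>y\<bar> - 1 \<or> int (right_end x div 2) = \<bar>y\<bar>"
  using assms unfolding right_end_def by (auto simp: nat_mult_distrib)

text \<open>Contracting the adjacency at \<open>e\<close> deletes the entry at \<open>adjacency_pos n e\<close>: normally the
  right one of the pair, but the left one when the pair ends with the frame entry \<open>n + 1\<close>.\<close>

definition adjacency_pos :: "nat \<Rightarrow> nat \<Rightarrow> nat" where
  "adjacency_pos n e = (if e < n then Suc e else n)"

definition collapse :: "nat \<Rightarrow> nat \<Rightarrow> nat" where
  "collapse e x = (if x < e then x else x - 1)"

lemma collapse_eq_iff: "x \<noteq> e \<Longrightarrow> y \<noteq> e \<Longrightarrow> collapse e x = collapse e y \<longleftrightarrow> x = y"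
  unfolding collapse_def by auto

locale adjacency =
  fixes n e :: nat and \<pi> :: "nat \<Rightarrow> int"
  assumes sp: "signed_perm n \<pi>" and n: "1 \<le> n" and e: "e \<le> n"
    and adjacent: "framed n \<pi> (Suc e) = framed n \<pi> e + 1"
begin

abbreviation "p \<equiv> adjacency_pos n e"
abbreviation "Q \<equiv> framed n \<pi>"
abbreviation "ext \<equiv> unsigned_ext n \<pi>"
abbreviation "\<pi>' \<equiv> delete_at n p \<pi>"
abbreviation "ext' \<equiv> unsigned_ext (n - 1) \<pi>'"

definition "a = \<bar>\<pi> p\<bar>"

text \<open>The black edge at the adjacency is the grey edge \<open>{2 k, 2 k + 1}\<close>.\<close>

definition "k = right_end (Q e) div 2"

lemma p_mem: "p \<in> {1..n}"
  using e n unfolding adjacency_pos_def by auto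

lemma e_le_p: "e \<le> p" "p \<le> Suc e"
  using e unfolding adjacency_pos_def by auto

lemma Q_p: "Q p = \<pi> p"
  using p_mem unfolding framed_def by auto

lemma adjacency_cases:
  "(e < n \<and> p = Suc e \<and> Q e + 1 = \<pi> p) \<or> (e = n \<and> p = n \<and> Q e = \<pi> p \<and> \<pi> p > 0)"
proof (cases "e < n")
  case True
  then show ?thesis using adjacent Q_p unfolding adjacency_pos_def by auto
next
  case False
  then have "e = n" using e by auto
  then have "Q e = int n" using adjacent unfolding framed_def by auto
  then show ?thesis using \<open>e = n\<close> n unfolding adjacency_pos_def framed_def by auto
qed

lemma \<pi>_p_nonzero: "\<pi> p \<noteq> 0"
  using signed_perm_range[OF sp p_mem] by simp

lemma a_ge_1: "a \<ge> 1"
  unfolding a_def using \<pi>_p_nonzero by auto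

lemma k_cases: "int k = a - 1 \<or> int k = a"
  unfolding k_def a_def using right_end_div_2_cases[OF \<pi>_p_nonzero, of "Q e"] adjacency_cases by auto

lemma abs_Q_neq_a: "i \<le> n + 1 \<Longrightarrow> i \<noteq> p \<Longrightarrow> \<bar>Q i\<bar> \<noteq> a"
  unfolding a_def using framed_abs_inj[OF sp, of i p] p_mem Q_p by auto

lemma signed_perm_contracted: "signed_perm (n - 1) \<pi>'"
  using signed_perm_delete_at[OF sp p_mem] .

lemma framed_contracted: "i \<le> n \<Longrightarrow> framed (n - 1) \<pi>' i = shrink a (Q (if i < p then i else Suc i))"
  unfolding a_def using framed_delete_at[OF sp p_mem] by blast

lemma black_edge_eq_grey_edge: "{ext (2 * e), ext (2 * e + 1)} = {2 * k, 2 * k + 1}"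
proof -
  have "ext (2 * e) = right_end (Q e)" using e by (simp add: unsigned_ext_eq)
  moreover have "ext (2 * e + 1) = grey_mate (ext (2 * e))"
    using grey_black_edge_iff_adjacency[OF e, of \<pi>] adjacent by simp
  ultimately show ?thesis unfolding k_def grey_mate_def by auto
qed

lemma k_le: "k \<le> n"
proof -
  have "2 * k + 1 \<in> {ext (2 * e), ext (2 * e + 1)}" using black_edge_eq_grey_edge by auto
  moreover have "ext (2 * e) \<le> 2 * n + 1" "ext (2 * e + 1) \<le> 2 * n + 1"
    using unsigned_ext_le[OF sp] e by simp_all
  ultimately show ?thesis by auto
qed

lemma unsigned_ext_mem_pair_iff:
  "j \<le> 2 * n + 1 \<Longrightarrow> ext j \<in> {2 * k, 2 * k + 1} \<longleftrightarrow> j \<in> {2 * e, 2 * e + 1}"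
  using unsigned_ext_inj[OF sp, of j "2 * e"] unsigned_ext_inj[OF sp, of j "2 * e + 1"] e
    black_edge_eq_grey_edge
  by (auto simp: doubleton_eq_iff)

end

context adjacency
begin

lemma unsigned_ext_contracted_even:
  assumes i: "i \<le> n" "i \<noteq> e"
  shows "ext' (drop_pair e (2 * i)) = drop_pair k (ext (2 * i))"
proof -
  have off_pair: "ext (2 * i) \<notin> {2 * k, 2 * k + 1}" using unsigned_ext_mem_pair_iff[of "2 * i"] i by auto
  have ext: "ext (2 * i) = right_end (Q i)" using i by (simp add: unsigned_ext_eq)
  note shrink = right_end_shrink[OF a_ge_1 k_cases abs_Q_neq_a]
  show ?thesis
  proof (cases "i < e")
    case True
    then have "i < p" "drop_pair e (2 * i) = 2 * i" using e_le_p by (auto simp: drop_pair_def)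
    then have "ext' (drop_pair e (2 * i)) = right_end (shrink a (Q i))"
      using framed_contracted[of i] True e by (simp add: unsigned_ext_eq)
    then show ?thesis using shrink[of i] ext off_pair \<open>i < p\<close> i by simp
  next
    case False
    then have "e < i" using i by simp
    then have "drop_pair e (2 * i) = 2 * (i - 1)" by (simp add: drop_pair_def diff_mult_distrib2)
    then have "ext' (drop_pair e (2 * i)) = right_end (framed (n - 1) \<pi>' (i - 1))"
      using i by (simp add: unsigned_ext_eq)
    also have "\<dots> = right_end (shrink a (Q (if i - 1 < p then i - 1 else i)))"
      using framed_contracted[of "i - 1"] i \<open>e < i\<close> by simp
    finally have ext': "ext' (drop_pair e (2 * i)) = \<dots>" .
    show ?thesis
    proof (cases "i - 1 < p")
      case True
      then have "i = p" "i - 1 = e" "Q e + 1 = \<pi> p" using \<open>e < i\<close> e_le_p adjacency_cases by auto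
      then have "ext' (drop_pair e (2 * i)) = right_end (shrink a (Q e))" using ext' True by simp
      also have "\<dots> = drop_pair k (right_end (\<pi> p))"
        using right_end_shrink_adjacent[OF \<pi>_p_nonzero \<open>Q e + 1 = \<pi> p\<close>] unfolding a_def k_def .
      finally show ?thesis using ext Q_p \<open>i = p\<close> by simp
    next
      case False
      then have "i \<noteq> p" using \<open>e < i\<close> by simp
      then show ?thesis using ext' ext shrink[of i] off_pair i False by simp
    qed
  qed
qed

lemma unsigned_ext_contracted_odd:
  assumes i: "i \<le> n" "i \<noteq> e"
  shows "ext' (drop_pair e (2 * i + 1)) = drop_pair k (ext (2 * i + 1))"
proof -
  have off_pair: "ext (2 * i + 1) \<notin> {2 * k, 2 * k + 1}"
    using unsigned_ext_mem_pair_iff[of "2 * i + 1"] i by auto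
  have ext: "ext (2 * i + 1) = left_end (Q (Suc i))" using i by (simp add: unsigned_ext_eq)
  note shrink = left_end_shrink[OF a_ge_1 k_cases abs_Q_neq_a]
  show ?thesis
  proof (cases "i < e")
    case True
    then have "ext' (drop_pair e (2 * i + 1)) = left_end (framed (n - 1) \<pi>' (Suc i))"
      using e by (simp add: drop_pair_def unsigned_ext_eq)
    also have "\<dots> = left_end (shrink a (Q (if Suc i < p then Suc i else Suc (Suc i))))"
      using framed_contracted[of "Suc i"] True e by simp
    finally have ext': "ext' (drop_pair e (2 * i + 1)) = \<dots>" .
    show ?thesis
    proof (cases "Suc i < p")
      case True
      then show ?thesis using ext' ext shrink[of "Suc i"] off_pair i by simp
    next
      case False
      then have "Suc i = n" "e = n" "p = n" using \<open>i < e\<close> e_le_p adjacency_cases by auto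
      then have "\<pi> n = int n" using adjacent n unfolding framed_def by auto
      moreover have "k = n" using \<open>e = n\<close> \<open>\<pi> n = int n\<close> n unfolding k_def framed_def right_end_def by auto
      ultimately show ?thesis
        using ext' ext \<open>Suc i = n\<close> \<open>p = n\<close> n
        unfolding a_def framed_def shrink_def left_end_def drop_pair_def by (auto simp: nat_add_distrib)
    qed
  next
    case False
    then have "e < i" using i by simp
    then have "p \<le> i" using e_le_p by simp
    have "drop_pair e (2 * i + 1) = 2 * (i - 1) + 1"
      using \<open>e < i\<close> by (simp add: drop_pair_def diff_mult_distrib2)
    then have "ext' (drop_pair e (2 * i + 1)) = left_end (framed (n - 1) \<pi>' i)"
      using i \<open>e < i\<close> by (simp add: unsigned_ext_eq)
    also have "\<dots> = left_end (shrink a (Q (Suc i)))" using framed_contracted[of i] i \<open>p \<le> i\<close> by simp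
    finally show ?thesis using ext shrink[of "Suc i"] off_pair i \<open>p \<le> i\<close> by simp
  qed
qed

lemma unsigned_ext_contracted:
  assumes "j \<le> 2 * n + 1" "j \<notin> {2 * e, 2 * e + 1}"
  shows "ext' (drop_pair e j) = drop_pair k (ext j)"
proof -
  have "j div 2 \<le> n" "j div 2 \<noteq> e" using assms by auto
  moreover have "j = 2 * (j div 2) \<or> j = 2 * (j div 2) + 1" by presburger
  ultimately show ?thesis
    using unsigned_ext_contracted_even[of "j div 2"] unsigned_ext_contracted_odd[of "j div 2"] by metis
qed

end

context adjacency
begin

lemma black_edge_contracted_iff:
  assumes x: "x \<notin> {2 * k, 2 * k + 1}" and y: "y \<notin> {2 * k, 2 * k + 1}"
  shows "(\<exists>j\<le>2 * n + 1. x = ext j \<and> y = ext (grey_mate j)) \<longleftrightarrow>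
    (\<exists>j\<le>2 * (n - 1) + 1. drop_pair k x = ext' j \<and> drop_pair k y = ext' (grey_mate j))"
proof
  assume "\<exists>j\<le>2 * n + 1. x = ext j \<and> y = ext (grey_mate j)"
  then obtain j where j: "j \<le> 2 * n + 1" "x = ext j" "y = ext (grey_mate j)" by blast
  have off: "j \<notin> {2 * e, 2 * e + 1}" using unsigned_ext_mem_pair_iff[OF j(1)] x j(2) by simp
  then have off_mate: "grey_mate j \<notin> {2 * e, 2 * e + 1}" unfolding grey_mate_mem_pair_iff .
  have "drop_pair k x = ext' (drop_pair e j)" using unsigned_ext_contracted[OF j(1) off] j(2) by simp
  moreover have "drop_pair k y = ext' (grey_mate (drop_pair e j))"
    using unsigned_ext_contracted[OF grey_mate_le[OF j(1)] off_mate] j(3) drop_pair_grey_mate[OF off]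
    by simp
  moreover have "drop_pair e j \<le> 2 * (n - 1) + 1"
    using bij_betw_drop_pair[OF e n] j(1) off unfolding bij_betw_def by auto
  ultimately show "\<exists>j\<le>2 * (n - 1) + 1. drop_pair k x = ext' j \<and> drop_pair k y = ext' (grey_mate j)"
    by blast
next
  assume "\<exists>j\<le>2 * (n - 1) + 1. drop_pair k x = ext' j \<and> drop_pair k y = ext' (grey_mate j)"
  then obtain j' where j': "j' \<le> 2 * (n - 1) + 1" "drop_pair k x = ext' j'"
    "drop_pair k y = ext' (grey_mate j')" by blast
  then have "j' \<in> drop_pair e ` ({0..2 * n + 1} - {2 * e, 2 * e + 1})"
    using bij_betw_drop_pair[OF e n] unfolding bij_betw_def by simp
  then obtain j where "j \<in> {0..2 * n + 1} - {2 * e, 2 * e + 1}" "j' = drop_pair e j" by blast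
  then have j: "j \<le> 2 * n + 1" "j \<notin> {2 * e, 2 * e + 1}" "j' = drop_pair e j" by auto
  have mate: "grey_mate j \<le> 2 * n + 1" "grey_mate j \<notin> {2 * e, 2 * e + 1}"
    using grey_mate_le[OF j(1)] j(2) unfolding grey_mate_mem_pair_iff by simp_all
  have ext_off: "ext j \<notin> {2 * k, 2 * k + 1}" "ext (grey_mate j) \<notin> {2 * k, 2 * k + 1}"
    using unsigned_ext_mem_pair_iff[OF j(1)] unsigned_ext_mem_pair_iff[OF mate(1)] j(2) mate(2) by simp_all
  have "drop_pair k x = drop_pair k (ext j)" using j' j unsigned_ext_contracted by simp
  then have "x = ext j" using drop_pair_eq_iff[OF x ext_off(1)] by simp
  moreover have "drop_pair k y = drop_pair k (ext (grey_mate j))"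
    using j' j unsigned_ext_contracted[OF mate] drop_pair_grey_mate[OF j(2)] by simp
  then have "y = ext (grey_mate j)" using drop_pair_eq_iff[OF y ext_off(2)] by simp
  ultimately show "\<exists>j\<le>2 * n + 1. x = ext j \<and> y = ext (grey_mate j)" using j(1) by blast
qed

lemma grey_edge_contracted_iff:
  assumes x: "x \<in> {0..2 * n + 1} - {2 * k, 2 * k + 1}" and y: "y \<notin> {2 * k, 2 * k + 1}"
  shows "(x \<le> 2 * n + 1 \<and> y = grey_mate x) \<longleftrightarrow>
    (drop_pair k x \<le> 2 * (n - 1) + 1 \<and> drop_pair k y = grey_mate (drop_pair k x))"
proof -
  have "grey_mate x \<notin> {2 * k, 2 * k + 1}" using x unfolding grey_mate_mem_pair_iff by simp
  have "drop_pair k y = grey_mate (drop_pair k x) \<longleftrightarrow> drop_pair k y = drop_pair k (grey_mate x)"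
    using drop_pair_grey_mate[of x k] x by simp
  also have "\<dots> \<longleftrightarrow> y = grey_mate x" using drop_pair_eq_iff[OF y \<open>grey_mate x \<notin> _\<close>] .
  finally have "drop_pair k y = grey_mate (drop_pair k x) \<longleftrightarrow> y = grey_mate x" .
  moreover have "drop_pair k x \<le> 2 * (n - 1) + 1"
    using bij_betw_drop_pair[OF k_le n] x unfolding bij_betw_def by auto
  ultimately show ?thesis using x by auto
qed

lemma bg_adj_contracted_iff:
  assumes "x \<in> {0..2 * n + 1} - {2 * k, 2 * k + 1}" "y \<in> {0..2 * n + 1} - {2 * k, 2 * k + 1}"
  shows "(x, y) \<in> bg_adj n \<pi> \<longleftrightarrow> (drop_pair k x, drop_pair k y) \<in> bg_adj (n - 1) \<pi>'"
  unfolding bg_adj_iff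
  using black_edge_contracted_iff[of x y] grey_edge_contracted_iff[of x y] assms by simp

text \<open>The adjacency is a 2-cycle of \<open>BG(\<pi>)\<close>, and the rest of \<open>BG(\<pi>)\<close> is \<open>BG(\<pi>')\<close>.\<close>

lemma bg_cycles_contracted: "bg_cycles n \<pi> = bg_cycles (n - 1) \<pi>' + 1"
proof -
  let ?V = "{0..2 * n + 1}" and ?P = "{2 * k, 2 * k + 1}" and ?E = "bg_adj n \<pi>"
  have closed: "x \<in> ?P \<longleftrightarrow> y \<in> ?P" if "(x, y) \<in> ?E" for x y
    using that unfolding bg_adj_iff
    using unsigned_ext_mem_pair_iff grey_mate_le grey_mate_mem_pair_iff by (metis (no_types, lifting))
  have "(2 * k, 2 * k + 1) \<in> ?E" "(2 * k + 1, 2 * k) \<in> ?E"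
    using k_le unfolding bg_adj_iff by (auto simp: grey_mate_def)
  then have connected: "(x, y) \<in> ?E\<^sup>*" if "x \<in> ?P" "y \<in> ?P" for x y
    using that by auto
  have "card (?V // ?E\<^sup>*) = card ((?V - ?P) // (?E \<inter> (?V - ?P) \<times> (?V - ?P))\<^sup>*) + 1"
    by (rule card_quotient_rtrancl_remove_class[OF _ _ _ bg_adj_subset[OF sp] closed connected])
      (use k_le in auto)
  also have "card ((?V - ?P) // (?E \<inter> (?V - ?P) \<times> (?V - ?P))\<^sup>*) =
      card ({0..2 * (n - 1) + 1} // (bg_adj (n - 1) \<pi>')\<^sup>*)"
    by (rule card_quotient_rtrancl_bij_betw[OF bij_betw_drop_pair[OF k_le n] _
          bg_adj_subset[OF signed_perm_contracted]])
      (use bg_adj_contracted_iff in auto)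
  finally show ?thesis unfolding bg_cycles_def using n by simp
qed

lemma collapse_mem_breakpoints_contracted_iff:
  assumes x: "x \<le> n" "x \<noteq> e"
  shows "collapse e x \<in> breakpoints (n - 1) \<pi>' \<longleftrightarrow> x \<in> breakpoints n \<pi>"
proof -
  let ?x = "collapse e x"
  have x': "?x \<le> n - 1" using x e unfolding collapse_def by auto
  have off: "2 * x \<notin> {2 * e, 2 * e + 1}" "2 * x + 1 \<notin> {2 * e, 2 * e + 1}" using x by auto
  have "drop_pair e (2 * x) = 2 * ?x" "drop_pair e (2 * x + 1) = 2 * ?x + 1"
    using x unfolding drop_pair_def collapse_def by auto
  then have ext': "ext' (2 * ?x) = drop_pair k (ext (2 * x))" "ext' (2 * ?x + 1) = drop_pair k (ext (2 * x + 1))"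
    using unsigned_ext_contracted[of "2 * x"] unsigned_ext_contracted[of "2 * x + 1"] x off by auto
  have off': "ext (2 * x) \<notin> {2 * k, 2 * k + 1}" "ext (2 * x + 1) \<notin> {2 * k, 2 * k + 1}"
    using unsigned_ext_mem_pair_iff off x by auto
  then have "grey_mate (ext (2 * x)) \<notin> {2 * k, 2 * k + 1}" using grey_mate_mem_pair_iff by blast
  have "?x \<in> breakpoints (n - 1) \<pi>' \<longleftrightarrow> grey_mate (ext' (2 * ?x)) \<noteq> ext' (2 * ?x + 1)"
    using grey_black_edge_iff_adjacency[OF x'] x' unfolding breakpoints_def by auto
  also have "\<dots> \<longleftrightarrow> drop_pair k (grey_mate (ext (2 * x))) \<noteq> drop_pair k (ext (2 * x + 1))"
    using ext' drop_pair_grey_mate off' by simp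
  also have "\<dots> \<longleftrightarrow> grey_mate (ext (2 * x)) \<noteq> ext (2 * x + 1)"
    using drop_pair_eq_iff[OF \<open>grey_mate (ext (2 * x)) \<notin> _\<close> off'(2)] by simp
  also have "\<dots> \<longleftrightarrow> x \<in> breakpoints n \<pi>"
    using grey_black_edge_iff_adjacency[OF x(1)] x(1) unfolding breakpoints_def by auto
  finally show ?thesis .
qed

lemma breakpoints_contracted: "breakpoints (n - 1) \<pi>' = collapse e ` breakpoints n \<pi>"
proof
  have "e \<notin> breakpoints n \<pi>" using adjacent unfolding breakpoints_def by auto
  then show "collapse e ` breakpoints n \<pi> \<subseteq> breakpoints (n - 1) \<pi>'"
    using collapse_mem_breakpoints_contracted_iff breakpoints_subset by fastforce
  show "breakpoints (n - 1) \<pi>' \<subseteq> collapse e ` breakpoints n \<pi>"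
  proof
    fix x' assume x': "x' \<in> breakpoints (n - 1) \<pi>'"
    define x where "x = (if x' < e then x' else Suc x')"
    have "x \<le> n" "x \<noteq> e" "x' = collapse e x"
      using x' breakpoints_subset[of "n - 1" \<pi>'] n unfolding x_def collapse_def by auto
    then show "x' \<in> collapse e ` breakpoints n \<pi>"
      using collapse_mem_breakpoints_contracted_iff x' by blast
  qed
qed

end

section \<open>Counting by breakpoint sets\<close>

text \<open>The entry deleted by the contraction at \<open>e < n\<close> is one more than its left neighbour if
  positive; if negative, it equals the neighbour after renumbering by \<open>shrink\<close>.\<close>

definition restored_value :: "nat \<Rightarrow> nat \<Rightarrow> (nat \<Rightarrow> int) \<Rightarrow> int" where
  "restored_value n e \<pi>' =
    (if e < n then (let u = framed (n - 1) \<pi>' e in if u \<ge> 0 then u + 1 else u) else int n)"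

lemma adjacency_insert_at:
  assumes sp: "signed_perm (n - 1) \<pi>'" and n: "1 \<le> n" and e: "e \<le> n"
  defines "\<pi> \<equiv> insert_at n (adjacency_pos n e) (restored_value n e \<pi>') \<pi>'"
  shows "adjacency n e \<pi>" and "delete_at n (adjacency_pos n e) \<pi> = \<pi>'"
proof -
  let ?p = "adjacency_pos n e" and ?s = "restored_value n e \<pi>'"
  have p: "?p \<in> {1..n}" using n e unfolding adjacency_pos_def by auto
  have "?s \<noteq> 0 \<and> \<bar>?s\<bar> \<le> int n"
  proof (cases "e < n")
    case True
    then have "\<bar>framed (n - 1) \<pi>' e\<bar> \<le> int (n - 1)" using framed_abs_le[OF sp] by auto
    then show ?thesis using True n unfolding restored_value_def Let_def by auto
  qed (use n in \<open>auto simp: restored_value_def\<close>)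
  then have s: "?s \<noteq> 0" "\<bar>?s\<bar> \<le> int n" by auto
  show "delete_at n ?p \<pi> = \<pi>'" unfolding \<pi>_def using delete_at_insert_at[OF sp p s] .
  have "framed n \<pi> (Suc e) = framed n \<pi> e + 1"
  proof (cases "e < n")
    case True
    then have "?p = Suc e" unfolding adjacency_pos_def by auto
    then have "framed n \<pi> (Suc e) = ?s" "framed n \<pi> e = grow \<bar>?s\<bar> (framed (n - 1) \<pi>' e)"
      unfolding \<pi>_def using framed_insert_at[OF sp p s] e by auto
    then show ?thesis using True unfolding restored_value_def Let_def grow_def by (auto simp: sgn_if)
  next
    case False
    then have "e = n" "?p = n" using e unfolding adjacency_pos_def by auto
    moreover have "framed (n - 1) \<pi>' n = int n" unfolding framed_def using n by auto
    ultimately have "framed n \<pi> n = int n" "framed n \<pi> (Suc n) = grow \<bar>?s\<bar> (int n)"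
      unfolding \<pi>_def using framed_insert_at[OF sp p s, of n] framed_insert_at[OF sp p s, of "Suc n"]
      by (auto simp: restored_value_def)
    then show ?thesis using \<open>e = n\<close> n unfolding restored_value_def grow_def by (auto simp: sgn_if)
  qed
  then show "adjacency n e \<pi>"
    using signed_perm_insert_at[OF sp p s] n e unfolding \<pi>_def by unfold_locales auto
qed

lemma (in adjacency) restored_value_contracted: "restored_value n e \<pi>' = \<pi> p"
proof (cases "e < n")
  case True
  then have p: "p = Suc e" "Q e + 1 = \<pi> p" using adjacency_cases by auto
  have "framed (n - 1) \<pi>' e = shrink a (Q e)" using framed_contracted[of e] p e by auto
  moreover have "shrink a (Q e) = (if \<pi> p > 0 then Q e else \<pi> p)"
    using p \<pi>_p_nonzero unfolding a_def shrink_def by (auto simp: sgn_if)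
  ultimately show ?thesis using p True \<pi>_p_nonzero unfolding restored_value_def Let_def by auto
next
  case False
  then have "e = n" using e by simp
  then have "Q e = int n" using adjacent unfolding framed_def by simp
  then show ?thesis using adjacency_cases False unfolding restored_value_def by auto
qed

definition perms_with_breakpoints :: "nat \<Rightarrow> nat \<Rightarrow> nat set \<Rightarrow> (nat \<Rightarrow> int) set" where
  "perms_with_breakpoints d n B =
    {\<pi>. signed_perm n \<pi> \<and> breakpoints n \<pi> = B \<and> bg_cycles n \<pi> + d = n + 1}"

lemma (in adjacency) mem_perms_with_breakpoints_iff_contracted:
  assumes "e \<notin> B"
  shows "\<pi> \<in> perms_with_breakpoints d n B \<longleftrightarrow> \<pi>' \<in> perms_with_breakpoints d (n - 1) (collapse e ` B)"
proof -
  have "e \<notin> breakpoints n \<pi>" using adjacent unfolding breakpoints_def by auto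
  moreover have "inj_on (collapse e) (- {e})" by (rule inj_onI) (simp add: collapse_eq_iff)
  ultimately have "collapse e ` breakpoints n \<pi> = collapse e ` B \<longleftrightarrow> breakpoints n \<pi> = B"
    using assms inj_on_image_eq_iff[of "collapse e" "- {e}"] by blast
  then show ?thesis
    unfolding perms_with_breakpoints_def breakpoints_contracted[symmetric]
    using sp signed_perm_contracted n bg_cycles_contracted by auto
qed

lemma adjacency_if_mem_perms_with_breakpoints:
  assumes "1 \<le> n" "e \<le> n" "e \<notin> B" "\<pi> \<in> perms_with_breakpoints d n B"
  shows "adjacency n e \<pi>"
  using assms unfolding perms_with_breakpoints_def breakpoints_def by unfold_locales auto

lemma card_perms_with_breakpoints_contract:
  assumes n: "1 \<le> n" and e: "e \<le> n" and e_B: "e \<notin> B"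
  shows "card (perms_with_breakpoints d n B) = card (perms_with_breakpoints d (n - 1) (collapse e ` B))"
proof -
  let ?p = "adjacency_pos n e"
  let ?A = "perms_with_breakpoints d n B" and ?A' = "perms_with_breakpoints d (n - 1) (collapse e ` B)"
  let ?restore = "\<lambda>\<pi>'. insert_at n ?p (restored_value n e \<pi>') \<pi>'"
  note adjacency = adjacency_if_mem_perms_with_breakpoints[OF n e e_B]
  have restore: "adjacency n e (?restore \<pi>')" "delete_at n ?p (?restore \<pi>') = \<pi>'" if "\<pi>' \<in> ?A'" for \<pi>'
    using adjacency_insert_at[OF _ n e] that unfolding perms_with_breakpoints_def by simp_all
  have "bij_betw (delete_at n ?p) ?A ?A'"
  proof (rule bij_betw_byWitness[where f' = ?restore])
    show "\<forall>\<pi>\<in>?A. ?restore (delete_at n ?p \<pi>) = \<pi>"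
    proof
      fix \<pi> assume "\<pi> \<in> ?A"
      then interpret adjacency n e \<pi> by (rule adjacency)
      show "?restore (delete_at n ?p \<pi>) = \<pi>"
        using restored_value_contracted insert_at_delete_at[OF sp p_mem] by simp
    qed
    show "delete_at n ?p ` ?A \<subseteq> ?A'"
    proof
      fix \<pi>' assume "\<pi>' \<in> delete_at n ?p ` ?A"
      then obtain \<pi> where "\<pi> \<in> ?A" "\<pi>' = delete_at n ?p \<pi>" by blast
      then interpret adjacency n e \<pi> by (simp add: adjacency)
      show "\<pi>' \<in> ?A'"
        using mem_perms_with_breakpoints_iff_contracted[OF e_B] \<open>\<pi> \<in> ?A\<close> \<open>\<pi>' = _\<close> by simp
    qed
    show "\<forall>\<pi>'\<in>?A'. delete_at n ?p (?restore \<pi>') = \<pi>'" using restore(2) by blast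
    show "?restore ` ?A' \<subseteq> ?A"
    proof
      fix \<pi> assume "\<pi> \<in> ?restore ` ?A'"
      then obtain \<pi>' where \<pi>': "\<pi>' \<in> ?A'" "\<pi> = ?restore \<pi>'" by blast
      interpret adjacency n e \<pi> using restore(1)[OF \<pi>'(1)] \<pi>'(2) by simp
      show "\<pi> \<in> ?A"
        using mem_perms_with_breakpoints_iff_contracted[OF e_B] restore(2)[OF \<pi>'(1)] \<pi>' by simp
    qed
  qed
  then show ?thesis by (rule bij_betw_same_card)
qed

text \<open>For \<open>b = 0\<close> this counts the signed permutation of \<open>0\<close>, which has no breakpoint.\<close>

definition count_all_breakpoints :: "nat \<Rightarrow> nat \<Rightarrow> nat" where
  "count_all_breakpoints d b = card (perms_with_breakpoints d (b - 1) {0..<b})"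

lemma card_perms_with_breakpoints:
  "B \<subseteq> {0..n} \<Longrightarrow> card (perms_with_breakpoints d n B) = count_all_breakpoints d (card B)"
proof (induction n arbitrary: B)
  case 0
  then consider "B = {}" | "B = {0}" by (auto simp: subset_singleton_iff)
  then show ?case by cases (simp_all add: count_all_breakpoints_def)
next
  case (Suc m)
  show ?case
  proof (cases "B = {0..Suc m}")
    case True
    then show ?thesis unfolding count_all_breakpoints_def by (simp add: atLeastLessThanSuc_atLeastAtMost)
  next
    case False
    then have "\<not> {0..Suc m} \<subseteq> B" using Suc.prems by blast
    then obtain e where "e \<in> {0..Suc m}" "e \<notin> B" by blast
    then have e: "e \<le> Suc m" "e \<notin> B" by auto
    have "collapse e ` B \<subseteq> {0..m}" using Suc.prems e unfolding collapse_def by auto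
    moreover have "inj_on (collapse e) B"
    proof (rule inj_onI)
      fix x y assume "x \<in> B" "y \<in> B" "collapse e x = collapse e y"
      then show "x = y" using collapse_eq_iff[of x e y] e by auto
    qed
    then have "card (collapse e ` B) = card B" by (rule card_image)
    ultimately show ?thesis
      using card_perms_with_breakpoints_contract[of "Suc m" e B d] e Suc.IH by simp
  qed
qed

section \<open>Signed permutations without adjacencies\<close>

definition perm_of_list :: "int list \<Rightarrow> nat \<Rightarrow> int" where
  "perm_of_list l i = (if 1 \<le> i \<and> i \<le> length l then l ! (i - 1) else 0)"

definition signed_perm_lists :: "nat \<Rightarrow> int list list" where
  "signed_perm_lists n =
    filter (\<lambda>l. distinct (map abs l)) (List.n_lists n (filter (\<lambda>x. x \<noteq> 0) [- int n..int n]))"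

lemma mem_signed_perm_lists_iff:
  "l \<in> set (signed_perm_lists n) \<longleftrightarrow>
    length l = n \<and> (\<forall>x\<in>set l. x \<noteq> 0 \<and> \<bar>x\<bar> \<le> int n) \<and> distinct (map abs l)"
  by (auto simp: signed_perm_lists_def set_n_lists)

lemma signed_perm_perm_of_list:
  assumes "l \<in> set (signed_perm_lists n)"
  shows "signed_perm n (perm_of_list l)"
proof (rule signed_permI)
  have l: "length l = n" "\<forall>x\<in>set l. x \<noteq> 0 \<and> \<bar>x\<bar> \<le> int n" "distinct (map abs l)"
    using assms unfolding mem_signed_perm_lists_iff by auto
  show "perm_of_list l i = 0" if "i \<notin> {1..n}" for i
    using that l unfolding perm_of_list_def by auto
  show "perm_of_list l i \<noteq> 0 \<and> \<bar>perm_of_list l i\<bar> \<le> int n" if "i \<in> {1..n}" for i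
    using that l nth_mem[of "i - 1" l] unfolding perm_of_list_def by auto
  show "i = i'" if "i \<in> {1..n}" "i' \<in> {1..n}" "\<bar>perm_of_list l i\<bar> = \<bar>perm_of_list l i'\<bar>" for i i'
  proof -
    have "map abs l ! (i - 1) = map abs l ! (i' - 1)" using that l unfolding perm_of_list_def by auto
    then have "i - 1 = i' - 1" using nth_eq_iff_index_eq[OF l(3)] l(1) that by auto
    then show ?thesis using that by auto
  qed
qed

lemma perm_of_list_map:
  assumes "signed_perm n \<rho>"
  shows "perm_of_list (map \<rho> [1..<n + 1]) = \<rho>"
proof
  fix i
  show "perm_of_list (map \<rho> [1..<n + 1]) i = \<rho> i"
    using signed_perm_zero[OF assms, of i] unfolding perm_of_list_def by (auto simp del: upt_Suc)
qed

lemma map_mem_signed_perm_lists: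
  assumes sp: "signed_perm n \<rho>"
  shows "map \<rho> [1..<n + 1] \<in> set (signed_perm_lists n)"
proof -
  have "inj_on (\<lambda>i. \<bar>\<rho> i\<bar>) {1..n}"
    by (rule inj_onI) (use signed_perm_abs_inj[OF sp] in blast)
  then have "distinct (map abs (map \<rho> [1..<n + 1]))"
    by (simp add: distinct_map atLeastLessThanSuc_atLeastAtMost comp_def del: upt_Suc)
  then show ?thesis
    unfolding mem_signed_perm_lists_iff using signed_perm_range[OF sp] by auto
qed

lemma signed_perms_eq_image: "{\<rho>. signed_perm n \<rho>} = perm_of_list ` set (signed_perm_lists n)"
proof
  show "{\<rho>. signed_perm n \<rho>} \<subseteq> perm_of_list ` set (signed_perm_lists n)"
  proof
    fix \<rho> assume "\<rho> \<in> {\<rho>. signed_perm n \<rho>}"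
    then have "signed_perm n \<rho>" by simp
    then show "\<rho> \<in> perm_of_list ` set (signed_perm_lists n)"
      using perm_of_list_map map_mem_signed_perm_lists by (metis image_eqI)
  qed
qed (use signed_perm_perm_of_list in auto)

lemma finite_signed_perms: "finite {\<rho>. signed_perm n \<rho>}"
  unfolding signed_perms_eq_image by simp

lemma card_signed_perms_filter:
  "card {\<rho>. signed_perm n \<rho> \<and> P \<rho>} = card (set (filter (\<lambda>l. P (perm_of_list l)) (signed_perm_lists n)))"
proof -
  have "{\<rho>. signed_perm n \<rho> \<and> P \<rho>} = perm_of_list ` set (filter (\<lambda>l. P (perm_of_list l)) (signed_perm_lists n))"
    using signed_perms_eq_image[of n] by auto
  moreover have "inj_on perm_of_list (set (signed_perm_lists n))"
  proof (rule inj_onI)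
    fix l l' assume l: "l \<in> set (signed_perm_lists n)" "l' \<in> set (signed_perm_lists n)"
      and eq: "perm_of_list l = perm_of_list l'"
    show "l = l'"
    proof (rule nth_equalityI)
      show "length l = length l'" using l unfolding mem_signed_perm_lists_iff by simp
      show "l ! i = l' ! i" if "i < length l" for i
        using fun_cong[OF eq, of "Suc i"] that \<open>length l = length l'\<close> unfolding perm_of_list_def by simp
    qed
  qed
  then have "inj_on perm_of_list (set (filter (\<lambda>l. P (perm_of_list l)) (signed_perm_lists n)))"
    by (rule inj_on_subset) auto
  ultimately show ?thesis by (simp add: card_image)
qed

context
  fixes n :: nat and \<rho> :: "nat \<Rightarrow> int"
  assumes sp: "signed_perm n \<rho>" and all: "breakpoints n \<rho> = {0..n}"
begin

text \<open>The cycle through the vertex \<open>0\<close> starts \<open>\<pi>'\<^sub>1, 0, 1, b\<close>, where \<open>b\<close> is the black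
  neighbour of \<open>1\<close>; it has length 4 exactly when the grey neighbour of \<open>b\<close> is \<open>\<pi>'\<^sub>1\<close>.\<close>

lemma bg_cycle_0_first_vertices:
  assumes j: "j \<le> 2 * n + 1" "unsigned_ext n \<rho> j = 1"
  defines "b \<equiv> unsigned_ext n \<rho> (grey_mate j)"
  shows "card {0, 1, unsigned_ext n \<rho> 1, b} = 4" "{0, 1, unsigned_ext n \<rho> 1, b} \<subseteq> (bg_adj n \<rho>)\<^sup>* `` {0}"
proof -
  let ?E = "bg_adj n \<rho>" and ?ext = "unsigned_ext n \<rho>"
  have inj: "a = a'" if "a \<le> 2 * n + 1" "a' \<le> 2 * n + 1" "?ext a = ?ext a'" for a a'
    using unsigned_ext_inj[OF sp] that by blast
  have mate_j: "grey_mate j \<le> 2 * n + 1" using grey_mate_le[OF j(1)] .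
  have ext_1: "?ext 1 \<noteq> 1"
    using all_breakpoints_no_grey_black_edge[OF sp all, of 0] by (simp add: unsigned_ext_0 grey_mate_def)
  have "j \<noteq> 0" using j(2) unsigned_ext_0 by (metis zero_neq_one)
  moreover have "j \<noteq> 1" using j(2) ext_1 by auto
  ultimately have "grey_mate j \<noteq> 1" "grey_mate j \<noteq> 0" unfolding grey_mate_def by presburger+
  then have "b \<noteq> 0" "b \<noteq> 1" "?ext 1 \<noteq> b" "?ext 1 \<noteq> 0"
    unfolding b_def using inj[of "grey_mate j" 0] inj[of "grey_mate j" j] inj[of 1 "grey_mate j"]
      inj[of 1 0] mate_j j unsigned_ext_0 grey_mate_neq[of j] by auto
  then show "card {0, 1, ?ext 1, b} = 4" using ext_1 by simp
  have "(0, 1) \<in> ?E" by (simp add: bg_adj_iff grey_mate_def)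
  moreover have "(0, ?ext 1) \<in> ?E"
    unfolding bg_adj_iff using unsigned_ext_0 by (intro disjI1 exI[of _ 0]) (simp add: grey_mate_def)
  moreover have "(1, b) \<in> ?E"
    unfolding bg_adj_iff b_def using j by (intro disjI1 exI[of _ j]) simp
  ultimately show "{0, 1, ?ext 1, b} \<subseteq> ?E\<^sup>* `` {0}" by (auto intro: rtrancl_into_rtrancl)
qed

lemma bg_cycle_0_closed:
  assumes j: "j \<le> 2 * n + 1" "unsigned_ext n \<rho> j = 1"
    and closing: "unsigned_ext n \<rho> 1 = grey_mate (unsigned_ext n \<rho> (grey_mate j))"
  defines "S \<equiv> {0, 1, unsigned_ext n \<rho> 1, unsigned_ext n \<rho> (grey_mate j)}"
  shows "bg_adj n \<rho> `` S \<subseteq> S"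
proof
  let ?ext = "unsigned_ext n \<rho>"
  have inj: "a = a'" if "a \<le> 2 * n + 1" "a' \<le> 2 * n + 1" "?ext a = ?ext a'" for a a'
    using unsigned_ext_inj[OF sp] that by blast
  have mate_j: "grey_mate j \<le> 2 * n + 1" using grey_mate_le[OF j(1)] .
  fix y assume "y \<in> bg_adj n \<rho> `` S"
  then obtain x where x: "x \<in> S" "(x, y) \<in> bg_adj n \<rho>" by blast
  then consider j' where "j' \<le> 2 * n + 1" "x = ?ext j'" "y = ?ext (grey_mate j')"
    | "y = grey_mate x" unfolding bg_adj_iff by blast
  then show "y \<in> S"
  proof cases
    case 1
    then have "j' \<in> {0, j, 1, grey_mate j}"
      using x(1) inj[of j' 0] inj[of j' j] inj[of j' 1] inj[of j' "grey_mate j"] unsigned_ext_0 j mate_j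
      unfolding S_def by auto
    then show ?thesis using 1 unsigned_ext_0 j unfolding S_def by (auto simp: grey_mate_def)
  next
    case 2
    then show ?thesis using x(1) closing unfolding S_def by (auto simp: grey_mate_def)
  qed
qed

lemma all_breakpoints_card_cycle_0_eq_4_iff:
  "card ((bg_adj n \<rho>)\<^sup>* `` {0}) = 4 \<longleftrightarrow>
    (\<exists>j\<in>set [0..<2 * n + 2]. unsigned_ext n \<rho> j = 1 \<and>
      unsigned_ext n \<rho> 1 = grey_mate (unsigned_ext n \<rho> (grey_mate j)))"
proof -
  let ?E = "bg_adj n \<rho>" and ?ext = "unsigned_ext n \<rho>"
  obtain j where j: "j \<le> 2 * n + 1" "?ext j = 1" using unsigned_ext_surj[OF sp, of 1] by auto
  define b where "b = ?ext (grey_mate j)"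
  note start = bg_cycle_0_first_vertices[OF j, folded b_def]
  have fin: "finite (?E\<^sup>* `` {0})"
    using rtrancl_Image_subset[OF bg_adj_subset[OF sp], of 0] by (auto intro: finite_subset)
  have crit: "(\<exists>j'\<in>set [0..<2 * n + 2]. ?ext j' = 1 \<and> ?ext 1 = grey_mate (?ext (grey_mate j'))) \<longleftrightarrow>
      ?ext 1 = grey_mate b"
  proof
    assume "\<exists>j'\<in>set [0..<2 * n + 2]. ?ext j' = 1 \<and> ?ext 1 = grey_mate (?ext (grey_mate j'))"
    then obtain j' where "j' \<in> set [0..<2 * n + 2]" "?ext j' = 1" "?ext 1 = grey_mate (?ext (grey_mate j'))"
      by blast
    moreover from this have "j' = j" using unsigned_ext_inj[OF sp, of j' j] j by (simp del: upt_Suc)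
    ultimately show "?ext 1 = grey_mate b" unfolding b_def by simp
  next
    assume "?ext 1 = grey_mate b"
    then show "\<exists>j'\<in>set [0..<2 * n + 2]. ?ext j' = 1 \<and> ?ext 1 = grey_mate (?ext (grey_mate j'))"
      using j unfolding b_def by (intro bexI[of _ j]) auto
  qed
  show ?thesis
  proof (cases "?ext 1 = grey_mate b")
    case True
    then have "?E `` {0, 1, ?ext 1, b} \<subseteq> {0, 1, ?ext 1, b}"
      using bg_cycle_0_closed[OF j] unfolding b_def by blast
    then have "?E\<^sup>* `` {0} \<subseteq> {0, 1, ?ext 1, b}" using Image_closed_trancl Image_mono by blast
    then have "card (?E\<^sup>* `` {0}) = 4" using start by (metis subset_antisym)
    then show ?thesis using crit True by (simp del: upt_Suc)
  next
    case False
    have "b \<le> 2 * n + 1" unfolding b_def using unsigned_ext_le[OF sp grey_mate_le[OF j(1)]] .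
    then have "(b, grey_mate b) \<in> ?E" unfolding bg_adj_iff by simp
    then have sub: "insert (grey_mate b) {0, 1, ?ext 1, b} \<subseteq> ?E\<^sup>* `` {0}"
      using start(2) by (auto intro: rtrancl_into_rtrancl)
    have "grey_mate b \<notin> {0, 1, ?ext 1, b}"
    proof -
      have "b \<noteq> 0" "b \<noteq> 1" using start(1) by (auto simp: card_insert_if split: if_splits)
      moreover have "grey_mate 0 = 1" "grey_mate 1 = 0" by (simp_all add: grey_mate_def)
      ultimately have "grey_mate b \<noteq> 0" "grey_mate b \<noteq> 1" using grey_mate_grey_mate by metis+
      then show ?thesis using False grey_mate_neq[of b] by auto
    qed
    then have "card (insert (grey_mate b) {0, 1, ?ext 1, b}) = 5" using start(1) by simp
    moreover have "card (insert (grey_mate b) {0, 1, ?ext 1, b}) \<le> card (?E\<^sup>* `` {0})"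
      using card_mono[OF fin sub] .
    ultimately have "card (?E\<^sup>* `` {0}) \<noteq> 4" by linarith
    then show ?thesis using crit False by (simp del: upt_Suc)
  qed
qed

end

lemma breakpoints_eq_all_iff:
  "breakpoints n \<rho> = {0..n} \<longleftrightarrow> (\<forall>e\<in>set [0..<n + 1]. framed n \<rho> (Suc e) \<noteq> framed n \<rho> e + 1)"
proof -
  have "breakpoints n \<rho> = {0..n} \<longleftrightarrow> (\<forall>e\<in>{0..n}. e \<in> breakpoints n \<rho>)"
    using breakpoints_subset by blast
  also have "\<dots> \<longleftrightarrow> (\<forall>e\<in>{0..<n + 1}. framed n \<rho> (Suc e) \<noteq> framed n \<rho> e + 1)"
    unfolding breakpoints_def by (simp add: atLeastLessThanSuc_atLeastAtMost)
  finally show ?thesis by (simp only: set_upt)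
qed

lemma all_breakpoints_bg_cycles_eq_2_iff:
  assumes "signed_perm 3 \<rho>" "breakpoints 3 \<rho> = {0..3}"
  shows "bg_cycles 3 \<rho> = 2 \<longleftrightarrow> card ((bg_adj 3 \<rho>)\<^sup>* `` {0}) = 4"
  unfolding bg_cycles_def
  by (rule card_quotient_rtrancl_eq_2_iff[OF _ bg_adj_subset[OF assms(1)] sym_bg_adj
        all_breakpoints_card_cycle_ge_4[OF assms]]) auto

lemma count_all_breakpoints_2_eq_0:
  assumes "b \<notin> {3, 4}"
  shows "count_all_breakpoints 2 b = 0"
proof -
  have "\<rho> \<notin> perms_with_breakpoints 2 (b - 1) {0..<b}" for \<rho>
  proof
    assume "\<rho> \<in> perms_with_breakpoints 2 (b - 1) {0..<b}"
    then have sp: "signed_perm (b - 1) \<rho>" and all: "breakpoints (b - 1) \<rho> = {0..<b}"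
      and cycles: "bg_cycles (b - 1) \<rho> + 2 = b - 1 + 1"
      unfolding perms_with_breakpoints_def by auto
    have "1 \<le> bg_cycles (b - 1) \<rho>" by (rule bg_cycles_ge_1)
    with cycles have "1 \<le> b" by simp
    then have "{0..<b} = {0..b - 1}" by auto
    then have "breakpoints (b - 1) \<rho> = {0..b - 1}" using all by simp
    from all_breakpoints_bg_cycles_le[OF sp this] show False
      using cycles \<open>1 \<le> bg_cycles (b - 1) \<rho>\<close> assms by simp arith
  qed
  then have "perms_with_breakpoints 2 (b - 1) {0..<b} = {}" by blast
  then show ?thesis unfolding count_all_breakpoints_def by simp
qed

lemma count_all_breakpoints_2_3: "count_all_breakpoints 2 3 = 4"
proof -
  have "perms_with_breakpoints 2 2 {0..<3} = {\<rho>. signed_perm 2 \<rho> \<and> breakpoints 2 \<rho> = {0..2}}"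
  proof -
    have "bg_cycles 2 \<rho> = 1" if "signed_perm 2 \<rho>" "breakpoints 2 \<rho> = {0..2}" for \<rho>
      using all_breakpoints_bg_cycles_le[OF that] bg_cycles_ge_1[of 2 \<rho>] by simp
    then show ?thesis unfolding perms_with_breakpoints_def by (auto simp: atLeastLessThanSuc_atLeastAtMost)
  qed
  then have "count_all_breakpoints 2 3 = card {\<rho>. signed_perm 2 \<rho> \<and>
      (\<forall>e\<in>set [0..<3]. framed 2 \<rho> (Suc e) \<noteq> framed 2 \<rho> e + 1)}"
    unfolding count_all_breakpoints_def breakpoints_eq_all_iff by simp
  also have "\<dots> = 4" unfolding card_signed_perms_filter by code_simp
  finally show ?thesis .
qed

lemma count_all_breakpoints_2_4: "count_all_breakpoints 2 4 = 5"
proof -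
  have "perms_with_breakpoints 2 3 {0..<4} = {\<rho>. signed_perm 3 \<rho> \<and> breakpoints 3 \<rho> = {0..3} \<and>
      (\<exists>j\<in>set [0..<8]. unsigned_ext 3 \<rho> j = 1 \<and>
        unsigned_ext 3 \<rho> 1 = grey_mate (unsigned_ext 3 \<rho> (grey_mate j)))}"
  proof -
    have "bg_cycles 3 \<rho> = 2 \<longleftrightarrow> (\<exists>j\<in>set [0..<8]. unsigned_ext 3 \<rho> j = 1 \<and>
        unsigned_ext 3 \<rho> 1 = grey_mate (unsigned_ext 3 \<rho> (grey_mate j)))"
      if "signed_perm 3 \<rho>" "breakpoints 3 \<rho> = {0..3}" for \<rho>
      using all_breakpoints_bg_cycles_eq_2_iff[OF that] all_breakpoints_card_cycle_0_eq_4_iff[OF that]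
      by simp
    moreover have "{0..<4::nat} = {0..3}" by auto
    ultimately show ?thesis unfolding perms_with_breakpoints_def by auto
  qed
  then have "count_all_breakpoints 2 4 = card {\<rho>. signed_perm 3 \<rho> \<and>
      (\<forall>e\<in>set [0..<4]. framed 3 \<rho> (Suc e) \<noteq> framed 3 \<rho> e + 1) \<and>
      (\<exists>j\<in>set [0..<8]. unsigned_ext 3 \<rho> j = 1 \<and>
        unsigned_ext 3 \<rho> 1 = grey_mate (unsigned_ext 3 \<rho> (grey_mate j)))}"
    unfolding count_all_breakpoints_def breakpoints_eq_all_iff by simp
  also have "\<dots> = 5" unfolding card_signed_perms_filter by code_simp
  finally show ?thesis .
qed

section \<open>Summing over breakpoint sets\<close>

lemma sum_Pow_card:
  assumes "finite A"
  shows "(\<Sum>B\<in>Pow A. h (card B)) = (\<Sum>b\<le>card A. (card A choose b) * h b)"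
proof -
  have "(\<Sum>B\<in>Pow A. h (card B)) = (\<Sum>b\<le>card A. \<Sum>B\<in>{B \<in> Pow A. card B = b}. h (card B))"
    using assms by (intro sum.group[symmetric]) (auto intro: card_mono)
  also have "\<dots> = (\<Sum>b\<le>card A. (card A choose b) * h b)"
    using n_subsets[OF assms] by (intro sum.cong) (auto simp: Pow_def)
  finally show ?thesis .
qed

lemma S_H_pm_eq_sum_count_all_breakpoints:
  assumes "d \<le> n + 1"
  shows "S_H_pm n (n + 1 - d) = (\<Sum>b\<le>n + 1. ((n + 1) choose b) * count_all_breakpoints d b)"
proof -
  have "{\<pi>. signed_perm n \<pi> \<and> bg_cycles n \<pi> = n + 1 - d} = (\<Union>B\<in>Pow {0..n}. perms_with_breakpoints d n B)"
    using assms breakpoints_subset unfolding perms_with_breakpoints_def by fastforce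
  then have "S_H_pm n (n + 1 - d) = card (\<Union>B\<in>Pow {0..n}. perms_with_breakpoints d n B)"
    unfolding S_H_pm_def by simp
  also have "\<dots> = (\<Sum>B\<in>Pow {0..n}. card (perms_with_breakpoints d n B))"
  proof (rule card_UN_disjoint)
    have "perms_with_breakpoints d n B \<subseteq> {\<pi>. signed_perm n \<pi>}" for B
      unfolding perms_with_breakpoints_def by blast
    then show "\<forall>B\<in>Pow {0..n}. finite (perms_with_breakpoints d n B)"
      using finite_signed_perms finite_subset by blast
  qed (auto simp: perms_with_breakpoints_def)
  also have "\<dots> = (\<Sum>B\<in>Pow {0..n}. count_all_breakpoints d (card B))"
    by (intro sum.cong) (auto simp: card_perms_with_breakpoints)
  also have "\<dots> = (\<Sum>b\<le>n + 1. ((n + 1) choose b) * count_all_breakpoints d b)"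
    using sum_Pow_card[of "{0..n}" "count_all_breakpoints d"] by simp
  finally show ?thesis .
qed

theorem mainTheorem7:
  fixes n :: nat
  assumes "n \<ge> 1"
  shows "S_H_pm n (n - 1) = 5 * ((n + 1) choose 4) + 4 * ((n + 1) choose 3)"
proof -
  have "S_H_pm n (n - 1) = (\<Sum>b\<le>n + 1. ((n + 1) choose b) * count_all_breakpoints 2 b)"
    using S_H_pm_eq_sum_count_all_breakpoints[of 2 n] assms by simp
  also have "\<dots> = (\<Sum>b\<le>n + 1. (if b = 3 then 4 * ((n + 1) choose 3) else 0) +
      (if b = 4 then 5 * ((n + 1) choose 4) else 0))"
    using count_all_breakpoints_2_eq_0 count_all_breakpoints_2_3 count_all_breakpoints_2_4
    by (intro sum.cong) auto
  also have "\<dots> = 5 * ((n + 1) choose 4) + 4 * ((n + 1) choose 3)"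
    by (simp add: sum.distrib binomial_eq_0)
  finally show ?thesis .
qed

end
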